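(* Let $\cdot:H\otimes B\to B$ be a symmetric partial action of $H$ on a unital algebra $B$, and let $\overline B$ be its globalization (the standard dilation of $B$). Then the standard dilation of the partial $H$-module $\underline{B\# H}$ is isomorphic, as a left $H$-module, to a direct summand of the smash product $\overline B\# H$. Here $\overline B\# H$ is regarded as a left $H$-module via $h\triangleright(f\# k)=(h_{(1)}\triangleright f)\# h_{(2)}k$.
   Context: Throughout, $k$ is a field and $H$ is a Hopf algebra over $k$ with bijective antipode $S$ and Sweedler notation $\Delta(h)=h_{(1)}\otimes h_{(2)}$. A symmetric partial action of $H$ on a unital algebra $B$ is a linear map $h\otimes b\mapsto h\cdot b$ such that for all $h,k\in H$, $a,b\in B$: - $1_H\cdot a=a$; - $h\cdot(ab)=(h_{(1)}\cdot a)(h_{(2)}\cdot b)$; - $h\cdot(k\cdot a)=(h_{(1)}\cdot1_B)(h_{(2)}k\cdot a)$; - $h\cdot(k\cdot a)=(h_{(1)}k\cdot a)(h_{(2)}\cdot1_B)$. A partial $H$-module is a vector space $M$ with linear $\pi:H\to\mathrm{End}_k(M)$ satisfying, for all $h,k$: - $\pi(1_H)=\mathrm{id}$; - $\pi(h)\pi(k_{(1)})\pi(S(k_{(2)}))=\pi(hk_{(1)})\pi(S(k_{(2)}))$; - $\pi(h_{(1)})\pi(S(h_{(2)}))\pi(k)=\pi(h_{(1)})\pi(S(h_{(2)})k)$; - $\pi(h)\pi(S(k_{(1)}))\pi(k_{(2)})=\pi(hS(k_{(1)}))\pi(k_{(2)})$; - $\pi(S(h_{(1)}))\pi(h_{(2)})\pi(k)=\pi(S(h_{(1)}))\pi(h_{(2)}k)$.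 Standard dilation of $(M,\pi)$: $\operatorname{Hom}_k(H,M)$ is a left $H$-module via $(h\triangleright f)(k)=f(kh)$, $\varphi(m)(h)=\pi(h)(m)$, and $\overline M=H\triangleright\varphi(M)$ is the $H$-submodule generated by $\varphi(M)$. For $M=B$ with $\pi(h)(b)=h\cdot b$, this gives $\overline B$, an $H$-module algebra under convolution $(f*g)(k)=f(k_{(1)})g(k_{(2)})$. $B\otimes H$ is a partial $H$-module via $h\cdot(b\otimes k)=(h_{(1)}\cdot b)\otimes h_{(2)}k$. The partial smash product $\underline{B\# H}$ is the subspace of $B\otimes H$ spanned by $b\# h:=b(h_{(1)}\cdot1_B)\otimes h_{(2)}$. It is a partial $H$-submodule (in fact a direct summand) of $B\otimes H$. $\overline B\# H$ denotes $\overline B\otimes H$ with product $(f\# h)(g\# k)=f*(h_{(1)}\triangleright g)\# h_{(2)}k$. *)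

theory Defs
  imports Complex_Main "HOL-Library.Poly_Mapping" "HOL-Library.Function_Algebras"
begin

(* 
The Hopf algebra H is represented as the free k-vector space on a basis
index type 'i, i.e. as finitely supported functions 'i \<Rightarrow>\<^sub>0 'k (every vector space over a
field has a basis).  Tensor products with H are then represented concretely:
  H \<otimes> H  = ('i \<times> 'i) \<Rightarrow>\<^sub>0 'k,   H \<otimes> H \<otimes> H = ('i \<times> 'i \<times> 'i) \<Rightarrow>\<^sub>0 'k,
  M \<otimes> H  = 'i \<Rightarrow>\<^sub>0 M   (finitely supported families indexed by the basis),
  Hom_k(H, M) = 'i \<Rightarrow> M (a linear map is determined by its values on the basis).
 *)

type_synonym ('i,'k) hvec = "'i \<Rightarrow>\<^sub>0 'k"

definition bas :: "'i \<Rightarrow> ('i \<Rightarrow>\<^sub>0 'k::zero_neq_one)" where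
  "bas i = Poly_Mapping.single i 1"

definition pms :: "('k \<Rightarrow> 'm \<Rightarrow> 'm) \<Rightarrow> 'k \<Rightarrow> ('i \<Rightarrow>\<^sub>0 'm::zero) \<Rightarrow> ('i \<Rightarrow>\<^sub>0 'm)" where
  "pms sc c p = Poly_Mapping.map (sc c) p"

definition hsc :: "'k \<Rightarrow> ('i \<Rightarrow>\<^sub>0 'k::field) \<Rightarrow> ('i \<Rightarrow>\<^sub>0 'k)" where
  "hsc = pms (*)"

definition fsc :: "('k \<Rightarrow> 'm \<Rightarrow> 'm) \<Rightarrow> 'k \<Rightarrow> ('i \<Rightarrow> 'm) \<Rightarrow> ('i \<Rightarrow> 'm)" where
  "fsc sc c f = (\<lambda>a. sc c (f a))"

definition tensor2 :: "('p \<Rightarrow>\<^sub>0 'k::field) \<Rightarrow> ('q \<Rightarrow>\<^sub>0 'k) \<Rightarrow> ('p \<times> 'q) \<Rightarrow>\<^sub>0 'k" where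
  "tensor2 x y = (\<Sum>i\<in>Poly_Mapping.keys x. \<Sum>j\<in>Poly_Mapping.keys y. Poly_Mapping.single (i, j) (Poly_Mapping.lookup x i * Poly_Mapping.lookup y j))"

definition tensor3 :: "('p \<Rightarrow>\<^sub>0 'k::field) \<Rightarrow> ('q \<Rightarrow>\<^sub>0 'k) \<Rightarrow> ('r \<Rightarrow>\<^sub>0 'k)
    \<Rightarrow> ('p \<times> 'q \<times> 'r) \<Rightarrow>\<^sub>0 'k" where
  "tensor3 x y z = (\<Sum>i\<in>Poly_Mapping.keys x. \<Sum>j\<in>Poly_Mapping.keys y. \<Sum>l\<in>Poly_Mapping.keys z.
      Poly_Mapping.single (i, j, l) (Poly_Mapping.lookup x i * Poly_Mapping.lookup y j * Poly_Mapping.lookup z l))"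

(* m \<otimes> h \<in> M \<otimes> H, represented in 'i \<Rightarrow>\<^sub>0 M *)
definition mtens :: "('k \<Rightarrow> 'm \<Rightarrow> 'm) \<Rightarrow> 'm \<Rightarrow> ('i \<Rightarrow>\<^sub>0 'k::field) \<Rightarrow> ('i \<Rightarrow>\<^sub>0 'm::comm_monoid_add)" where
  "mtens sc m h = (\<Sum>a\<in>Poly_Mapping.keys h. Poly_Mapping.single a (sc (Poly_Mapping.lookup h a) m))"

(* Sweedler sums: for t = \<Sum> t_1 \<otimes> t_2 in H \<otimes> H and F bilinear,
  sw sc t F = \<Sum> F t_1 t_2  (F applied to basis tensors, extended linearly) *)
definition sw :: "('k \<Rightarrow> 'v \<Rightarrow> 'v) \<Rightarrow> (('i \<times> 'i) \<Rightarrow>\<^sub>0 'k::field)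
    \<Rightarrow> (('i \<Rightarrow>\<^sub>0 'k) \<Rightarrow> ('i \<Rightarrow>\<^sub>0 'k) \<Rightarrow> 'v) \<Rightarrow> 'v::comm_monoid_add" where
  "sw sc t F = (\<Sum>p\<in>Poly_Mapping.keys t. sc (Poly_Mapping.lookup t p) (F (bas (fst p)) (bas (snd p))))"

definition bilinear_k :: "('k::field \<Rightarrow> 'a \<Rightarrow> 'a) \<Rightarrow> ('k \<Rightarrow> 'b \<Rightarrow> 'b) \<Rightarrow> ('k \<Rightarrow> 'c \<Rightarrow> 'c)
    \<Rightarrow> ('a::ab_group_add \<Rightarrow> 'b::ab_group_add \<Rightarrow> 'c::ab_group_add) \<Rightarrow> bool" where
  "bilinear_k s1 s2 s3 F \<longleftrightarrow> (\<forall>x. Vector_Spaces.linear s2 s3 (F x)) \<and> (\<forall>y. Vector_Spaces.linear s1 s3 (\<lambda>x. F x y))"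

definition hopf_algebra ::
  "(('i \<Rightarrow>\<^sub>0 'k) \<Rightarrow> ('i \<Rightarrow>\<^sub>0 'k) \<Rightarrow> ('i \<Rightarrow>\<^sub>0 'k)) \<Rightarrow> ('i \<Rightarrow>\<^sub>0 'k)
   \<Rightarrow> (('i \<Rightarrow>\<^sub>0 'k) \<Rightarrow> ('i \<times> 'i) \<Rightarrow>\<^sub>0 'k) \<Rightarrow> (('i \<Rightarrow>\<^sub>0 'k) \<Rightarrow> 'k::field)
   \<Rightarrow> (('i \<Rightarrow>\<^sub>0 'k) \<Rightarrow> ('i \<Rightarrow>\<^sub>0 'k)) \<Rightarrow> bool" where
  "hopf_algebra mul one comul eps S \<longleftrightarrow>
     \<comment> \<open>algebra\<close>
     bilinear_k hsc hsc hsc mul \<and>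
     (\<forall>x y z. mul (mul x y) z = mul x (mul y z)) \<and>
     (\<forall>x. mul one x = x \<and> mul x one = x) \<and>
     \<comment> \<open>coalgebra\<close>
     Vector_Spaces.linear hsc hsc comul \<and>
     Vector_Spaces.linear hsc (*) eps \<and>
     (\<forall>h. sw hsc (comul h) (\<lambda>x y. sw hsc (comul x) (\<lambda>u v. tensor3 u v y))
          = sw hsc (comul h) (\<lambda>x y. sw hsc (comul y) (\<lambda>u v. tensor3 x u v))) \<and>
     (\<forall>h. sw hsc (comul h) (\<lambda>x y. hsc (eps x) y) = h \<and> sw hsc (comul h) (\<lambda>x y. hsc (eps y) x) = h) \<and>
     \<comment> \<open>bialgebra\<close>
     (\<forall>h k. comul (mul h k) = sw hsc (comul h) (\<lambda>a b. sw hsc (comul k) (\<lambda>c d. tensor2 (mul a c) (mul b d)))) \<and>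
     comul one = tensor2 one one \<and>
     (\<forall>h k. eps (mul h k) = eps h * eps k) \<and> eps one = 1 \<and>
     \<comment> \<open>antipode, bijective\<close>
     Vector_Spaces.linear hsc hsc S \<and>
     (\<forall>h. sw hsc (comul h) (\<lambda>a b. mul (S a) b) = hsc (eps h) one \<and>
          sw hsc (comul h) (\<lambda>a b. mul a (S b)) = hsc (eps h) one) \<and>
     bij S"

definition k_algebra :: "('k::field \<Rightarrow> 'B::ring_1 \<Rightarrow> 'B) \<Rightarrow> bool" where
  "k_algebra sB \<longleftrightarrow> vector_space sB \<and> (\<forall>c x y. sB c (x * y) = sB c x * y \<and> sB c (x * y) = x * sB c y)"

definition sym_partial_action ::
  "(('i \<Rightarrow>\<^sub>0 'k) \<Rightarrow> ('i \<Rightarrow>\<^sub>0 'k) \<Rightarrow> ('i \<Rightarrow>\<^sub>0 'k)) \<Rightarrow> ('i \<Rightarrow>\<^sub>0 'k)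
   \<Rightarrow> (('i \<Rightarrow>\<^sub>0 'k) \<Rightarrow> ('i \<times> 'i) \<Rightarrow>\<^sub>0 'k) \<Rightarrow> ('k::field \<Rightarrow> 'B::ring_1 \<Rightarrow> 'B)
   \<Rightarrow> (('i \<Rightarrow>\<^sub>0 'k) \<Rightarrow> 'B \<Rightarrow> 'B) \<Rightarrow> bool" where
  "sym_partial_action mul one comul sB act \<longleftrightarrow>
     bilinear_k hsc sB sB act \<and>
     (\<forall>a. act one a = a) \<and>
     (\<forall>h a b. act h (a * b) = sw sB (comul h) (\<lambda>x y. act x a * act y b)) \<and>
     (\<forall>h k a. act h (act k a) = sw sB (comul h) (\<lambda>x y. act x 1 * act (mul y k) a)) \<and>
     (\<forall>h k a. act h (act k a) = sw sB (comul h) (\<lambda>x y. act (mul x k) a * act y 1))"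

definition hom_ev :: "('k \<Rightarrow> 'm \<Rightarrow> 'm) \<Rightarrow> ('i \<Rightarrow> 'm) \<Rightarrow> ('i \<Rightarrow>\<^sub>0 'k::field) \<Rightarrow> 'm::comm_monoid_add" where
  "hom_ev sc f k = (\<Sum>a\<in>Poly_Mapping.keys k. sc (Poly_Mapping.lookup k a) (f a))"

definition hom_act :: "(('i \<Rightarrow>\<^sub>0 'k) \<Rightarrow> ('i \<Rightarrow>\<^sub>0 'k) \<Rightarrow> ('i \<Rightarrow>\<^sub>0 'k)) \<Rightarrow> ('k::field \<Rightarrow> 'm \<Rightarrow> 'm)
    \<Rightarrow> ('i \<Rightarrow>\<^sub>0 'k) \<Rightarrow> ('i \<Rightarrow> 'm) \<Rightarrow> ('i \<Rightarrow> 'm::comm_monoid_add)" where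
  "hom_act mul sc h f = (\<lambda>a. hom_ev sc f (mul (bas a) h))"

definition dil_phi :: "(('i \<Rightarrow>\<^sub>0 'k::field) \<Rightarrow> 'm \<Rightarrow> 'm) \<Rightarrow> 'm \<Rightarrow> ('i \<Rightarrow> 'm)" where
  "dil_phi \<pi> m = (\<lambda>a. \<pi> (bas a) m)"

definition std_dilation :: "(('i \<Rightarrow>\<^sub>0 'k) \<Rightarrow> ('i \<Rightarrow>\<^sub>0 'k) \<Rightarrow> ('i \<Rightarrow>\<^sub>0 'k)) \<Rightarrow> ('k::field \<Rightarrow> 'm \<Rightarrow> 'm)
    \<Rightarrow> (('i \<Rightarrow>\<^sub>0 'k) \<Rightarrow> 'm \<Rightarrow> 'm) \<Rightarrow> 'm set \<Rightarrow> ('i \<Rightarrow> 'm::ab_group_add) set" where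
  "std_dilation mul sc \<pi> M = module.span (fsc sc) {hom_act mul sc h (dil_phi \<pi> m) | h m. m \<in> M}"

(* partial H-module structure on B \<otimes> H: h\<cdot>(b \<otimes> k) = (h_1\<cdot>b) \<otimes> h_2 k *)
definition BH_pi :: "(('i \<Rightarrow>\<^sub>0 'k) \<Rightarrow> ('i \<Rightarrow>\<^sub>0 'k) \<Rightarrow> ('i \<Rightarrow>\<^sub>0 'k))
    \<Rightarrow> (('i \<Rightarrow>\<^sub>0 'k) \<Rightarrow> ('i \<times> 'i) \<Rightarrow>\<^sub>0 'k) \<Rightarrow> ('k::field \<Rightarrow> 'B::ring_1 \<Rightarrow> 'B)
    \<Rightarrow> (('i \<Rightarrow>\<^sub>0 'k) \<Rightarrow> 'B \<Rightarrow> 'B) \<Rightarrow> ('i \<Rightarrow>\<^sub>0 'k) \<Rightarrow> ('i \<Rightarrow>\<^sub>0 'B) \<Rightarrow> ('i \<Rightarrow>\<^sub>0 'B)" where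
  "BH_pi mul comul sB act h t =
     (\<Sum>a\<in>Poly_Mapping.keys t. sw (pms sB) (comul h) (\<lambda>x y. mtens sB (act x (Poly_Mapping.lookup t a)) (mul y (bas a))))"

(* b # h = b (h_1 \<cdot> 1) \<otimes> h_2 *)
definition psmash_elt :: "(('i \<Rightarrow>\<^sub>0 'k) \<Rightarrow> ('i \<times> 'i) \<Rightarrow>\<^sub>0 'k) \<Rightarrow> ('k::field \<Rightarrow> 'B::ring_1 \<Rightarrow> 'B)
    \<Rightarrow> (('i \<Rightarrow>\<^sub>0 'k) \<Rightarrow> 'B \<Rightarrow> 'B) \<Rightarrow> 'B \<Rightarrow> ('i \<Rightarrow>\<^sub>0 'k) \<Rightarrow> ('i \<Rightarrow>\<^sub>0 'B)" where
  "psmash_elt comul sB act b h = sw (pms sB) (comul h) (\<lambda>x y. mtens sB (b * act x 1) y)"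

definition psmash :: "(('i \<Rightarrow>\<^sub>0 'k) \<Rightarrow> ('i \<times> 'i) \<Rightarrow>\<^sub>0 'k) \<Rightarrow> ('k::field \<Rightarrow> 'B::ring_1 \<Rightarrow> 'B)
    \<Rightarrow> (('i \<Rightarrow>\<^sub>0 'k) \<Rightarrow> 'B \<Rightarrow> 'B) \<Rightarrow> ('i \<Rightarrow>\<^sub>0 'B) set" where
  "psmash comul sB act = module.span (pms sB) {psmash_elt comul sB act b h | b h. True}"

definition globB :: "(('i \<Rightarrow>\<^sub>0 'k) \<Rightarrow> ('i \<Rightarrow>\<^sub>0 'k) \<Rightarrow> ('i \<Rightarrow>\<^sub>0 'k)) \<Rightarrow> ('k::field \<Rightarrow> 'B::ring_1 \<Rightarrow> 'B)
    \<Rightarrow> (('i \<Rightarrow>\<^sub>0 'k) \<Rightarrow> 'B \<Rightarrow> 'B) \<Rightarrow> ('i \<Rightarrow> 'B) set" where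
  "globB mul sB act = std_dilation mul sB act UNIV"

(* \<overline>B # H = \<overline>B \<otimes> H \<subseteq> Hom_k(H,B) \<otimes> H = 'i \<Rightarrow>\<^sub>0 ('i \<Rightarrow> 'B) *)
definition smashB :: "(('i \<Rightarrow>\<^sub>0 'k) \<Rightarrow> ('i \<Rightarrow>\<^sub>0 'k) \<Rightarrow> ('i \<Rightarrow>\<^sub>0 'k)) \<Rightarrow> ('k::field \<Rightarrow> 'B::ring_1 \<Rightarrow> 'B)
    \<Rightarrow> (('i \<Rightarrow>\<^sub>0 'k) \<Rightarrow> 'B \<Rightarrow> 'B) \<Rightarrow> ('i \<Rightarrow>\<^sub>0 ('i \<Rightarrow> 'B)) set" where
  "smashB mul sB act = module.span (pms (fsc sB)) {mtens (fsc sB) f k | f k. f \<in> globB mul sB act}"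

definition smash_act :: "(('i \<Rightarrow>\<^sub>0 'k) \<Rightarrow> ('i \<Rightarrow>\<^sub>0 'k) \<Rightarrow> ('i \<Rightarrow>\<^sub>0 'k))
    \<Rightarrow> (('i \<Rightarrow>\<^sub>0 'k) \<Rightarrow> ('i \<times> 'i) \<Rightarrow>\<^sub>0 'k) \<Rightarrow> ('k::field \<Rightarrow> 'B::ring_1 \<Rightarrow> 'B)
    \<Rightarrow> ('i \<Rightarrow>\<^sub>0 'k) \<Rightarrow> ('i \<Rightarrow>\<^sub>0 ('i \<Rightarrow> 'B)) \<Rightarrow> ('i \<Rightarrow>\<^sub>0 ('i \<Rightarrow> 'B))" where
  "smash_act mul comul sB h t =
     (\<Sum>a\<in>Poly_Mapping.keys t. sw (pms (fsc sB)) (comul h)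
        (\<lambda>x y. mtens (fsc sB) (hom_act mul sB x (Poly_Mapping.lookup t a)) (mul y (bas a))))"

definition h_submodule :: "('k::field \<Rightarrow> 'v \<Rightarrow> 'v) \<Rightarrow> ('h \<Rightarrow> 'v \<Rightarrow> 'v) \<Rightarrow> 'v::ab_group_add set \<Rightarrow> bool" where
  "h_submodule sc hact N \<longleftrightarrow> module.subspace sc N \<and> (\<forall>h. \<forall>x\<in>N. hact h x \<in> N)"

end

theory Submission
  imports Defs
begin

(*
  The map \<Theta> : \<overline>B # H \<rightarrow> Hom(H, B \<otimes> H), \<Theta>(f # a)(k) = f(k\<^sub>1) \<otimes> k\<^sub>2 a, is H-linear
  and injective (a left inverse multiplies the H-factor by S\<^sup>-\<^sup>1), and it maps \<overline>B # H
  onto the standard dilation of B \<otimes> H. The projection b \<otimes> h \<mapsto> b # h of B \<otimes> H onto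
  \<underline>B # H commutes with the partial action, so applied pointwise it is an H-linear
  projection of the dilation of B \<otimes> H onto the dilation of \<underline>B # H. Pulling back its
  range and kernel along \<Theta> splits \<overline>B # H into two H-submodules, and \<Theta> identifies the
  first with the dilation of \<underline>B # H.
*)

lemma lookup_map_zero: "g 0 = 0 \<Longrightarrow> Poly_Mapping.lookup (Poly_Mapping.map g p) k = g (Poly_Mapping.lookup p k)"
  by transfer (auto simp: when_def)

lemma vs_scale_zero_right: "vector_space sc \<Longrightarrow> sc a 0 = 0"
  by (simp add: module.scale_zero_right module_iff_vector_space)
lemma vs_scale_zero_left: "vector_space sc \<Longrightarrow> sc 0 x = 0"
  by (simp add: module.scale_zero_left module_iff_vector_space)
lemma vs_scale_one: "vector_space sc \<Longrightarrow> sc 1 x = x"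
  by (simp add: module.scale_one module_iff_vector_space)
lemma vs_scale_right_distrib: "vector_space sc \<Longrightarrow> sc a (x + y) = sc a x + sc a y"
  by (simp add: module.scale_right_distrib module_iff_vector_space)
lemma vs_scale_left_distrib: "vector_space sc \<Longrightarrow> sc (a + b) x = sc a x + sc b x"
  by (simp add: module.scale_left_distrib module_iff_vector_space)
lemma vs_scale_scale: "vector_space sc \<Longrightarrow> sc a (sc b x) = sc (a * b) x"
  by (simp add: module.scale_scale module_iff_vector_space)
lemma vs_scale_sum_right: "vector_space sc \<Longrightarrow> sc a (sum f A) = (\<Sum>x\<in>A. sc a (f x))"
  by (simp add: module.scale_sum_right module_iff_vector_space)
lemma vs_scale_commute: "vector_space sc \<Longrightarrow> sc a (sc b x) = sc b (sc a x)"
  by (simp add: vs_scale_scale mult.commute)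

lemma lookup_pms: "vector_space sc \<Longrightarrow> Poly_Mapping.lookup (pms sc c p) k = sc c (Poly_Mapping.lookup p k)"
  unfolding pms_def by (rule lookup_map_zero) (simp add: vs_scale_zero_right)

lemma vector_space_pms: assumes "vector_space sc" shows "vector_space (pms sc)"
  unfolding vector_space_def
  by (intro conjI allI poly_mapping_eqI)
     (simp_all add: lookup_pms[OF assms] lookup_add vs_scale_right_distrib[OF assms]
        vs_scale_left_distrib[OF assms] vs_scale_scale[OF assms] vs_scale_one[OF assms])

lemma vector_space_fsc: assumes "vector_space sc" shows "vector_space (fsc sc)"
  unfolding vector_space_def
  by (intro conjI allI ext)
     (simp_all add: fsc_def vs_scale_right_distrib[OF assms] vs_scale_left_distrib[OF assms]
        vs_scale_scale[OF assms] vs_scale_one[OF assms])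

lemma vector_space_mult: "vector_space ((*) :: 'k::field \<Rightarrow> 'k \<Rightarrow> 'k)"
  unfolding vector_space_def by (auto simp: algebra_simps)

lemma vector_space_hsc: "vector_space (hsc :: 'k::field \<Rightarrow> ('i \<Rightarrow>\<^sub>0 'k) \<Rightarrow> _)"
  unfolding hsc_def by (rule vector_space_pms[OF vector_space_mult])

lemma lookup_hsc: "Poly_Mapping.lookup (hsc c p) k = c * Poly_Mapping.lookup p k"
  unfolding hsc_def by (rule lookup_pms[OF vector_space_mult])

lemma fsc_apply: "fsc sc c f a = sc c (f a)"
  by (simp add: fsc_def)

lemma lookup_bas: "Poly_Mapping.lookup (bas i) j = (if i = j then 1 else 0)"
  by (simp add: bas_def lookup_single)

lemma keys_bas [simp]: "Poly_Mapping.keys (bas i :: 'i \<Rightarrow>\<^sub>0 'k::zero_neq_one) = {i}"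
  by (simp add: bas_def)

text \<open>Unlike \<^const>\<open>Vector_Spaces.linear\<close>, \<open>lin\<close> does not require the two scalings to be
  module structures, so composition rules for it need no side conditions.\<close>

definition lin :: "('k \<Rightarrow> 'a \<Rightarrow> 'a) \<Rightarrow> ('k \<Rightarrow> 'b \<Rightarrow> 'b) \<Rightarrow> ('a::ab_group_add \<Rightarrow> 'b::ab_group_add) \<Rightarrow> bool" where
  "lin s1 s2 L \<longleftrightarrow> (\<forall>x y. L (x + y) = L x + L y) \<and> (\<forall>c x. L (s1 c x) = s2 c (L x))"

lemma linI: "(\<And>x y. L (x + y) = L x + L y) \<Longrightarrow> (\<And>c x. L (s1 c x) = s2 c (L x)) \<Longrightarrow> lin s1 s2 L"
  by (auto simp: lin_def)

lemma lin_add: "lin s1 s2 L \<Longrightarrow> L (x + y) = L x + L y"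
  by (auto simp: lin_def)

lemma lin_scale: "lin s1 s2 L \<Longrightarrow> L (s1 c x) = s2 c (L x)"
  by (auto simp: lin_def)

lemma lin_additive: "lin s1 s2 L \<Longrightarrow> additive L"
  by unfold_locales (rule lin_add)

lemma lin_sum: "lin s1 s2 L \<Longrightarrow> L (sum f A) = (\<Sum>a\<in>A. L (f a))"
  by (rule additive.sum[OF lin_additive])

lemma lin_zero: "lin s1 s2 L \<Longrightarrow> L 0 = 0"
  by (rule additive.zero[OF lin_additive])

lemma lin_diff: "lin s1 s2 L \<Longrightarrow> L (x - y) = L x - L y"
  by (rule additive.diff[OF lin_additive])

lemma linear_lin: "Vector_Spaces.linear s1 s2 L \<Longrightarrow> lin s1 s2 L"
  by (auto simp: Vector_Spaces.linear_iff lin_def)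

lemma lin_comp: "lin s1 s2 L \<Longrightarrow> lin s2 s3 M \<Longrightarrow> lin s1 s3 (\<lambda>x. M (L x))"
  by (auto simp: lin_def)

lemma lin_id: "lin s s (\<lambda>x. x)"
  by (simp add: lin_def)

lemma lin_sum_fun: "vector_space s2 \<Longrightarrow> (\<And>a. lin s1 s2 (f a)) \<Longrightarrow> lin s1 s2 (\<lambda>x. \<Sum>a\<in>A. f a x)"
  unfolding lin_def by (simp add: sum.distrib vs_scale_sum_right)

lemma lin_scale_comp: "vector_space sc \<Longrightarrow> lin s1 sc L \<Longrightarrow> lin s1 sc (\<lambda>x. sc c (L x))"
  unfolding lin_def by (simp add: vs_scale_right_distrib vs_scale_commute)

lemma lin_module_hom:
  "vector_space s1 \<Longrightarrow> vector_space s2 \<Longrightarrow> lin s1 s2 L \<Longrightarrow> module_hom s1 s2 L"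
  by (simp add: module_hom_iff module_iff_vector_space lin_def)

lemma span_in_generators: "vector_space s \<Longrightarrow> g \<in> G \<Longrightarrow> g \<in> module.span s G"
  by (simp add: module.span_base module_iff_vector_space)

lemma vs_subspace_span: "vector_space s \<Longrightarrow> module.subspace s (module.span s G)"
  by (simp add: module.subspace_span module_iff_vector_space)

lemma vs_subspace_sum:
  "vector_space s \<Longrightarrow> module.subspace s V \<Longrightarrow> (\<And>x. x \<in> A \<Longrightarrow> f x \<in> V) \<Longrightarrow> sum f A \<in> V"
  using module.subspace_sum module_iff_vector_space by metis

lemma lin_span_into_subspace:
  assumes vs1: "vector_space s1" and vs2: "vector_space s2" and L: "lin s1 s2 L"
    and x: "x \<in> module.span s1 G" and gen: "\<And>g. g \<in> G \<Longrightarrow> L g \<in> V" and V: "module.subspace s2 V"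
  shows "L x \<in> V"
proof -
  interpret module_hom s1 s2 L by (rule lin_module_hom[OF vs1 vs2 L])
  have "L x \<in> m2.span (L ` G)" using x by (simp add: span_image)
  also have "\<dots> \<subseteq> V" using gen V by (intro m2.span_minimal) auto
  finally show ?thesis .
qed

lemma lin_fixes_span:
  assumes vs: "vector_space s" and L: "lin s s L" and x: "x \<in> module.span s G"
    and gen: "\<And>g. g \<in> G \<Longrightarrow> L g = g"
  shows "L x = x"
proof -
  interpret module_pair s s
    using vs by (simp add: module_pair_def module_iff_vector_space)
  show ?thesis
    by (rule module_hom_eq_on_span[OF lin_module_hom[OF vs vs L] lin_module_hom[OF vs vs lin_id] gen x])
qed

section \<open>Direct summands cut out by an equivariant projection\<close>

lemma h_submodule_kernel:
  assumes vs1: "vector_space s1" and vs2: "vector_space s2"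
    and X: "h_submodule s1 A X" and L: "lin s1 s2 L"
    and L_equiv: "\<And>h x. L (A h x) = A' h (L x)" and A'_zero: "\<And>h. A' h 0 = 0"
  shows "h_submodule s1 A {t \<in> X. L t = 0}"
proof -
  interpret m1: module s1 using vs1 by (simp add: module_iff_vector_space)
  have Xs: "m1.subspace X" and XA: "\<And>h x. x \<in> X \<Longrightarrow> A h x \<in> X"
    using X by (auto simp: h_submodule_def)
  show ?thesis
    unfolding h_submodule_def
  proof (intro conjI allI ballI m1.subspaceI)
    show "0 \<in> {t \<in> X. L t = 0}" by (simp add: m1.subspace_0[OF Xs] lin_zero[OF L])
  next
    fix x y assume "x \<in> {t \<in> X. L t = 0}" "y \<in> {t \<in> X. L t = 0}"
    then show "x + y \<in> {t \<in> X. L t = 0}" by (simp add: m1.subspace_add[OF Xs] lin_add[OF L])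
  next
    fix c x assume "x \<in> {t \<in> X. L t = 0}"
    then show "s1 c x \<in> {t \<in> X. L t = 0}"
      by (simp add: m1.subspace_scale[OF Xs] lin_scale[OF L] vs_scale_zero_right[OF vs2])
  next
    fix h x assume "x \<in> {t \<in> X. L t = 0}"
    then show "A h x \<in> {t \<in> X. L t = 0}" by (simp add: XA L_equiv A'_zero)
  qed
qed

lemma inv_into_equivariant_iso:
  assumes vs: "vector_space s"
    and N: "h_submodule s A N" and F: "lin s s' F" "inj_on F N" "\<And>h x. F (A h x) = A' h (F x)"
    and image_N: "F ` N = D"
  shows "\<forall>x\<in>D. \<forall>y\<in>D. inv_into N F (x + y) = inv_into N F x + inv_into N F y"
    and "\<forall>c. \<forall>x\<in>D. inv_into N F (s' c x) = s c (inv_into N F x)"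
    and "\<forall>h. \<forall>x\<in>D. inv_into N F (A' h x) = A h (inv_into N F x)"
    and "bij_betw (inv_into N F) D N"
proof -
  interpret m1: module s using vs by (simp add: module_iff_vector_space)
  have Ns: "m1.subspace N" and NA: "\<And>h x. x \<in> N \<Longrightarrow> A h x \<in> N"
    using N by (auto simp: h_submodule_def)
  have into: "inv_into N F y \<in> N" if "y \<in> D" for y
    by (rule inv_into_into) (simp add: that image_N)
  have F_inv: "F (inv_into N F y) = y" if "y \<in> D" for y
    by (rule f_inv_into_f) (simp add: that image_N)
  have eq: "inv_into N F y = t" if "t \<in> N" "F t = y" for t y
    using that by (rule inv_into_f_eq[OF F(2)])
  show "\<forall>x\<in>D. \<forall>y\<in>D. inv_into N F (x + y) = inv_into N F x + inv_into N F y"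
    by (intro ballI eq) (simp_all add: m1.subspace_add[OF Ns] into F_inv lin_add[OF F(1)])
  show "\<forall>c. \<forall>x\<in>D. inv_into N F (s' c x) = s c (inv_into N F x)"
    by (intro allI ballI eq) (simp_all add: m1.subspace_scale[OF Ns] into F_inv lin_scale[OF F(1)])
  show "\<forall>h. \<forall>x\<in>D. inv_into N F (A' h x) = A h (inv_into N F x)"
    by (intro allI ballI eq) (simp_all add: NA into F_inv F(3))
  show "bij_betw (inv_into N F) D N"
    unfolding image_N[symmetric] by (rule bij_betw_inv_into[OF inj_on_imp_bij_betw[OF F(2)]])
qed

lemma image_preimage_of_fixed_points:
  fixes F :: "'a \<Rightarrow> 'b::ab_group_add"
  assumes P_into: "\<And>x. x \<in> X \<Longrightarrow> P (F x) \<in> D" and P_fix: "\<And>y. y \<in> D \<Longrightarrow> P y = y"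
    and D: "D \<subseteq> F ` X"
  shows "F ` {t \<in> X. P (F t) - F t = 0} = D"
proof
  show "F ` {t \<in> X. P (F t) - F t = 0} \<subseteq> D"
  proof (rule image_subsetI)
    fix t assume "t \<in> {t \<in> X. P (F t) - F t = 0}"
    then have "t \<in> X" "P (F t) = F t" by simp_all
    with P_into show "F t \<in> D" by metis
  qed
  show "D \<subseteq> F ` {t \<in> X. P (F t) - F t = 0}"
  proof
    fix y assume y: "y \<in> D"
    from subsetD[OF D y] obtain t where t: "y = F t" "t \<in> X" by (rule imageE)
    with y P_fix have "t \<in> {t \<in> X. P (F t) - F t = 0}" by simp
    with t show "y \<in> F ` {t \<in> X. P (F t) - F t = 0}" by (rule_tac image_eqI) simp_all
  qed
qed

lemma decompose_fixed_plus_kernel: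
  assumes vs: "vector_space s" and X: "module.subspace s X" and F: "lin s s' F" and P: "lin s' s' P"
    and P_into: "\<And>x. x \<in> X \<Longrightarrow> P (F x) \<in> D" and P_fix: "\<And>y. y \<in> D \<Longrightarrow> P y = y"
    and D: "D \<subseteq> F ` X" and t: "t \<in> X"
  shows "\<exists>n\<in>{t \<in> X. P (F t) - F t = 0}. \<exists>n'\<in>{t \<in> X. P (F t) = 0}. t = n + n'"
proof -
  interpret module s using vs by (simp add: module_iff_vector_space)
  have "P (F t) \<in> F ` X" using D P_into[OF t] by (rule subsetD)
  then obtain n where n: "n \<in> X" "F n = P (F t)" by (metis imageE)
  then have "n \<in> {t \<in> X. P (F t) - F t = 0}" using P_fix[OF P_into[OF t]] by simp
  moreover have "t - n \<in> {t \<in> X. P (F t) = 0}"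
    using n P_fix[OF P_into[OF t]] by (simp add: subspace_diff[OF X t] lin_diff[OF F] lin_diff[OF P])
  ultimately show ?thesis by (intro bexI[of _ n] bexI[of _ "t - n"]) simp_all
qed

text \<open>An injective equivariant linear map \<open>F\<close> on \<open>X\<close> whose image contains \<open>D\<close>, together
  with an equivariant linear projection \<open>P\<close> of \<open>F ` X\<close> onto \<open>D\<close>, identifies \<open>D\<close> with the
  direct summand \<open>F\<^sup>-\<^sup>1(D)\<close> of \<open>X\<close>, a complement being \<open>F\<^sup>-\<^sup>1(ker P)\<close>.\<close>

lemma h_submodule_direct_summand_iso:
  fixes s :: "'k::field \<Rightarrow> 'a::ab_group_add \<Rightarrow> 'a" and s' :: "'k \<Rightarrow> 'b::ab_group_add \<Rightarrow> 'b"
    and A :: "'h \<Rightarrow> 'a \<Rightarrow> 'a" and A' :: "'h \<Rightarrow> 'b \<Rightarrow> 'b"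
  assumes vs: "vector_space s" and vs': "vector_space s'"
    and X: "h_submodule s A X" and A'_lin: "\<And>h. lin s' s' (A' h)"
    and F: "lin s s' F" "inj_on F X" "\<And>h x. F (A h x) = A' h (F x)"
    and P: "lin s' s' P" "\<And>h y. P (A' h y) = A' h (P y)"
    and P_into: "\<And>x. x \<in> X \<Longrightarrow> P (F x) \<in> D"
    and P_fix: "\<And>y. y \<in> D \<Longrightarrow> P y = y"
    and D: "D \<subseteq> F ` X"
  shows "\<exists>N N' (\<Phi> :: 'b \<Rightarrow> 'a).
           h_submodule s A N \<and> h_submodule s A N' \<and> N \<subseteq> X \<and> N' \<subseteq> X \<and> N \<inter> N' = {0} \<and>
           (\<forall>t\<in>X. \<exists>n\<in>N. \<exists>n'\<in>N'. t = n + n') \<and>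
           (\<forall>x\<in>D. \<forall>y\<in>D. \<Phi> (x + y) = \<Phi> x + \<Phi> y) \<and>
           (\<forall>c. \<forall>x\<in>D. \<Phi> (s' c x) = s c (\<Phi> x)) \<and>
           (\<forall>h. \<forall>x\<in>D. \<Phi> (A' h x) = A h (\<Phi> x)) \<and>
           bij_betw \<Phi> D N"
proof -
  interpret m1: module s using vs by (simp add: module_iff_vector_space)
  define N where "N = {t \<in> X. P (F t) - F t = 0}"
  define N' where "N' = {t \<in> X. P (F t) = 0}"
  have Xs: "m1.subspace X" using X by (simp add: h_submodule_def)
  have PF: "lin s s' (\<lambda>x. P (F x))" by (rule lin_comp[OF F(1) P(1)])
  have PF_equiv: "P (F (A h x)) = A' h (P (F x))" for h x by (simp add: F(3) P(2))
  have L: "lin s s' (\<lambda>x. P (F x) - F x)"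
    using vs' by (intro linI) (simp_all add: lin_add[OF P(1)] lin_add[OF F(1)] lin_scale[OF P(1)]
        lin_scale[OF F(1)] module.scale_right_diff_distrib module_iff_vector_space)
  have L_equiv: "P (F (A h x)) - F (A h x) = A' h (P (F x) - F x)" for h x
    by (simp add: P(2) F(3) lin_diff[OF A'_lin])
  have hN: "h_submodule s A N"
    unfolding N_def
    by (rule h_submodule_kernel[where A'=A', OF vs vs' X L L_equiv lin_zero[OF A'_lin]])
  have hN': "h_submodule s A N'"
    unfolding N'_def by (rule h_submodule_kernel[where A'=A', OF vs vs' X PF PF_equiv lin_zero[OF A'_lin]])
  have image_N: "F ` N = D"
    unfolding N_def using P_into P_fix D by (rule image_preimage_of_fixed_points)
  have inj_N: "inj_on F N" using F(2) by (rule inj_on_subset) (auto simp: N_def)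
  have inter: "N \<inter> N' = {0}"
  proof -
    have "t = 0" if "t \<in> N \<inter> N'" for t
    proof -
      from that have t: "t \<in> X" "F t = F 0" by (auto simp: N_def N'_def lin_zero[OF F(1)])
      show "t = 0" by (rule inj_onD[OF F(2) t(2) t(1) m1.subspace_0[OF Xs]])
    qed
    moreover have "0 \<in> N \<inter> N'" using hN hN' by (simp add: h_submodule_def m1.subspace_0)
    ultimately show ?thesis by blast
  qed
  have decomp: "\<forall>t\<in>X. \<exists>n\<in>N. \<exists>n'\<in>N'. t = n + n'"
    unfolding N_def N'_def using decompose_fixed_plus_kernel[OF vs Xs F(1) P(1) P_into P_fix D] by blast
  have "N \<subseteq> X" "N' \<subseteq> X" by (auto simp: N_def N'_def)
  with hN hN' inter decomp inv_into_equivariant_iso[OF vs hN F(1) inj_N F(3) image_N]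
  show ?thesis by (intro exI[of _ N] exI[of _ N'] exI[of _ "inv_into N F"] conjI)
qed

section \<open>Free vector spaces and Sweedler sums\<close>

definition lin_ext :: "('k \<Rightarrow> 'v \<Rightarrow> 'v) \<Rightarrow> ('p \<Rightarrow>\<^sub>0 'k::field) \<Rightarrow> ('p \<Rightarrow> 'v) \<Rightarrow> 'v::comm_monoid_add" where
  "lin_ext sc w G = (\<Sum>p\<in>Poly_Mapping.keys w. sc (Poly_Mapping.lookup w p) (G p))"

lemma lin_ext_keys:
  assumes "vector_space sc" "finite K" "Poly_Mapping.keys t \<subseteq> K"
  shows "lin_ext sc t G = (\<Sum>p\<in>K. sc (Poly_Mapping.lookup t p) (G p))"
  unfolding lin_ext_def
  using assms by (intro sum.mono_neutral_left) (auto simp: in_keys_iff vs_scale_zero_left)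

lemma lin_lin_ext:
  fixes sc :: "'k::field \<Rightarrow> 'v::ab_group_add \<Rightarrow> 'v" and G :: "'p \<Rightarrow> 'v"
  assumes "vector_space sc"
  shows "lin hsc sc (\<lambda>w. lin_ext sc w G)"
proof (rule linI)
  fix t1 t2 :: "'p \<Rightarrow>\<^sub>0 'k"
  let ?K = "Poly_Mapping.keys t1 \<union> Poly_Mapping.keys t2"
  have K: "finite ?K" "Poly_Mapping.keys (t1 + t2) \<subseteq> ?K"
    "Poly_Mapping.keys t1 \<subseteq> ?K" "Poly_Mapping.keys t2 \<subseteq> ?K"
    using keys_add[of t1 t2] by auto
  show "lin_ext sc (t1 + t2) G = lin_ext sc t1 G + lin_ext sc t2 G"
    unfolding lin_ext_keys[OF assms K(1,2)] lin_ext_keys[OF assms K(1,3)] lin_ext_keys[OF assms K(1,4)]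
    by (simp add: lookup_add vs_scale_left_distrib[OF assms] sum.distrib)
next
  fix c and t :: "'p \<Rightarrow>\<^sub>0 'k"
  have k: "Poly_Mapping.keys (hsc c t) \<subseteq> Poly_Mapping.keys t"
    by (auto simp: in_keys_iff lookup_hsc)
  show "lin_ext sc (hsc c t) G = sc c (lin_ext sc t G)"
    unfolding lin_ext_keys[OF assms finite_keys k] lin_ext_keys[OF assms finite_keys order_refl, of t]
    by (simp add: lookup_hsc vs_scale_scale[OF assms] vs_scale_sum_right[OF assms])
qed

lemma lin_ext_single: "vector_space sc \<Longrightarrow> lin_ext sc (Poly_Mapping.single p c) G = sc c (G p)"
  by (subst lin_ext_keys[of _ "{p}"]) (simp_all add: lookup_single)

lemma sw_eq_lin_ext: "sw sc t F = lin_ext sc t (\<lambda>p. F (bas (fst p)) (bas (snd p)))"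
  by (simp add: sw_def lin_ext_def)

lemma lin_sw_tensor: "vector_space sc \<Longrightarrow> lin hsc sc (\<lambda>t. sw sc t F)"
  unfolding sw_eq_lin_ext by (rule lin_lin_ext)

lemma sw_single: "vector_space sc \<Longrightarrow> sw sc (Poly_Mapping.single p c) F = sc c (F (bas (fst p)) (bas (snd p)))"
  unfolding sw_eq_lin_ext by (rule lin_ext_single)

lemma sw_sum_tensor: "vector_space sc \<Longrightarrow> sw sc (sum f A) F = (\<Sum>a\<in>A. sw sc (f a) F)"
  by (rule lin_sum[OF lin_sw_tensor])

lemma sw_linear: "lin s1 s2 L \<Longrightarrow> L (sw s1 t F) = sw s2 t (\<lambda>x y. L (F x y))"
  unfolding sw_def by (simp add: lin_sum lin_scale)

lemma sw_scale_fun: "vector_space sc \<Longrightarrow> sw sc t (\<lambda>x y. sc c (F x y)) = sc c (sw sc t F)"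
  unfolding sw_def by (simp add: vs_scale_sum_right vs_scale_commute)

lemma sw_sum_fun: "vector_space sc \<Longrightarrow> sw sc t (\<lambda>x y. \<Sum>a\<in>A. G a x y) = (\<Sum>a\<in>A. sw sc t (G a))"
  unfolding sw_def by (simp add: vs_scale_sum_right sum.swap[where A="Poly_Mapping.keys t"])

lemma sw_cong: "(\<And>i j. F (bas i) (bas j) = G (bas i) (bas j)) \<Longrightarrow> sw sc t F = sw sc t G"
  unfolding sw_def by simp

lemma sw_swap:
  assumes "vector_space sc"
  shows "sw sc t (\<lambda>x y. sw sc u (\<lambda>z w. G x y z w)) = sw sc u (\<lambda>z w. sw sc t (\<lambda>x y. G x y z w))"
  unfolding sw_def
  by (simp add: vs_scale_sum_right[OF assms] vs_scale_commute[OF assms] sum.swap[where A="Poly_Mapping.keys t"])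

lemma lin_sw_fun:
  "vector_space sc \<Longrightarrow> (\<And>a b. lin s1 sc (\<lambda>x. F x a b)) \<Longrightarrow> lin s1 sc (\<lambda>x. sw sc t (\<lambda>a b. F x a b))"
  unfolding lin_def sw_def by (simp add: vs_scale_right_distrib vs_scale_commute sum.distrib vs_scale_sum_right)

lemma sw_in_subspace:
  assumes vs: "vector_space sc" and V: "module.subspace sc V" and F: "\<And>i j. F (bas i) (bas j) \<in> V"
  shows "sw sc t F \<in> V"
proof -
  interpret module sc using vs by (simp add: module_iff_vector_space)
  show ?thesis unfolding sw_def
    by (intro subspace_sum[OF V] subspace_scale[OF V] F)
qed

lemma basis_expansion: "(x :: 'i \<Rightarrow>\<^sub>0 'k::field) = (\<Sum>i\<in>Poly_Mapping.keys x. hsc (Poly_Mapping.lookup x i) (bas i))"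
proof (rule poly_mapping_eqI)
  fix k
  have "(\<Sum>i\<in>Poly_Mapping.keys x. Poly_Mapping.lookup (hsc (Poly_Mapping.lookup x i) (bas i)) k)
      = (\<Sum>i\<in>Poly_Mapping.keys x. (if i = k then Poly_Mapping.lookup x i else 0))"
    by (rule sum.cong) (auto simp: lookup_hsc lookup_bas)
  then show "Poly_Mapping.lookup x k = Poly_Mapping.lookup (\<Sum>i\<in>Poly_Mapping.keys x. hsc (Poly_Mapping.lookup x i) (bas i)) k"
    by (simp add: lookup_sum sum.delta in_keys_iff)
qed

lemma lin_basis_expansion:
  assumes "lin hsc sc L"
  shows "L (x :: 'i \<Rightarrow>\<^sub>0 'k::field) = (\<Sum>i\<in>Poly_Mapping.keys x. sc (Poly_Mapping.lookup x i) (L (bas i)))"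
  by (subst basis_expansion) (simp only: lin_sum[OF assms] lin_scale[OF assms])

lemma lin_eq_on_basis:
  assumes "lin hsc sc L" "lin hsc sc M" "\<And>i. L (bas i) = M (bas i)"
  shows "L (x :: 'i \<Rightarrow>\<^sub>0 'k::field) = M x"
  unfolding lin_basis_expansion[OF assms(1), of x] lin_basis_expansion[OF assms(2), of x] assms(3) ..

lemma single_expansion:
  "(t :: 'i \<Rightarrow>\<^sub>0 'm::comm_monoid_add) = (\<Sum>a\<in>Poly_Mapping.keys t. Poly_Mapping.single a (Poly_Mapping.lookup t a))"
proof (rule poly_mapping_eqI)
  fix k
  have "(\<Sum>i\<in>Poly_Mapping.keys t. Poly_Mapping.lookup (Poly_Mapping.single i (Poly_Mapping.lookup t i)) k)
      = (\<Sum>i\<in>Poly_Mapping.keys t. (if i = k then Poly_Mapping.lookup t i else 0))"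
    by (rule sum.cong) (auto simp: lookup_single when_def)
  then show "Poly_Mapping.lookup t k = Poly_Mapping.lookup (\<Sum>a\<in>Poly_Mapping.keys t. Poly_Mapping.single a (Poly_Mapping.lookup t a)) k"
    by (simp add: lookup_sum sum.delta in_keys_iff)
qed

lemma lin_eq_on_singles:
  assumes "lin s1 s2 L" "lin s1' s2 M" "\<And>a m. L (Poly_Mapping.single a m) = M (Poly_Mapping.single a m)"
  shows "L t = M t"
  by (subst (1 2) single_expansion) (simp only: lin_sum[OF assms(1)] lin_sum[OF assms(2)] assms(3))

lemma sw_tensor2:
  assumes vs: "vector_space sc" and l1: "\<And>x. lin hsc sc (F x)" and l2: "\<And>y. lin hsc sc (\<lambda>x. F x y)"
  shows "sw sc (tensor2 x y) F = F x y"
proof -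
  have "sw sc (tensor2 x y) F = (\<Sum>i\<in>Poly_Mapping.keys x. \<Sum>j\<in>Poly_Mapping.keys y.
      sc (Poly_Mapping.lookup x i * Poly_Mapping.lookup y j) (F (bas i) (bas j)))"
    unfolding tensor2_def by (simp add: sw_sum_tensor[OF vs] sw_single[OF vs])
  also have "\<dots> = (\<Sum>i\<in>Poly_Mapping.keys x. sc (Poly_Mapping.lookup x i) (F (bas i) y))"
    by (simp add: lin_basis_expansion[OF l1, of _ y] vs_scale_sum_right[OF vs] vs_scale_scale[OF vs])
  also have "\<dots> = F x y"
    by (rule lin_basis_expansion[OF l2, symmetric])
  finally show ?thesis .
qed

lemma tensor3_bas: "tensor3 (bas i) (bas j) (bas l) = Poly_Mapping.single (i, j, l) (1::'k::field)"
  unfolding tensor3_def by (simp add: lookup_bas)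

lemma lookup_mtens: "vector_space sc \<Longrightarrow> Poly_Mapping.lookup (mtens sc m h) a = sc (Poly_Mapping.lookup h a) m"
  unfolding mtens_def lookup_sum lookup_single
  by (subst sum.cong[OF refl, where h="\<lambda>x. if x = a then sc (Poly_Mapping.lookup h x) m else 0"])
     (auto simp: when_def in_keys_iff vs_scale_zero_left)

lemma mtens_lin_right: "vector_space sc \<Longrightarrow> lin hsc (pms sc) (mtens sc m)"
  by (rule linI; rule poly_mapping_eqI)
     (simp_all add: lookup_mtens lookup_add lookup_pms lookup_hsc vs_scale_left_distrib vs_scale_scale)

lemma mtens_lin_left: "vector_space sc \<Longrightarrow> lin sc (pms sc) (\<lambda>m. mtens sc m h)"
  by (rule linI; rule poly_mapping_eqI)
     (simp_all add: lookup_mtens lookup_add lookup_pms vs_scale_right_distrib vs_scale_commute)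

lemma mtens_bas: "vector_space sc \<Longrightarrow> mtens sc m (bas a) = Poly_Mapping.single a m"
  by (rule poly_mapping_eqI) (simp add: lookup_mtens lookup_bas lookup_single vs_scale_one vs_scale_zero_left)

lemma lin_mtens_left_comp: "vector_space sc \<Longrightarrow> lin s1 sc L \<Longrightarrow> lin s1 (pms sc) (\<lambda>x. mtens sc (L x) h)"
  by (rule lin_comp[OF _ mtens_lin_left])

lemma lin_mtens_right_comp: "vector_space sc \<Longrightarrow> lin s1 hsc L \<Longrightarrow> lin s1 (pms sc) (\<lambda>x. mtens sc m (L x))"
  by (rule lin_comp[OF _ mtens_lin_right])

lemma hom_ev_eq_lin_ext: "hom_ev sc f k = lin_ext sc k f"
  unfolding hom_ev_def lin_ext_def ..

lemma hom_ev_lin_arg: "vector_space sc \<Longrightarrow> lin hsc sc (hom_ev sc f)"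
  unfolding hom_ev_eq_lin_ext by (rule lin_lin_ext)

lemma hom_ev_bas: "vector_space sc \<Longrightarrow> hom_ev sc f (bas a) = f a"
  unfolding hom_ev_def by (simp add: lookup_bas vs_scale_one)

lemma hom_ev_lin_fun: "vector_space sc \<Longrightarrow> lin (fsc sc) sc (\<lambda>f. hom_ev sc f k)"
  unfolding hom_ev_def lin_def fsc_def plus_fun_def
  by (simp add: vs_scale_right_distrib sum.distrib vs_scale_sum_right vs_scale_commute)

lemma hom_ev_basis_restriction: "vector_space sc \<Longrightarrow> lin hsc sc L \<Longrightarrow> hom_ev sc (\<lambda>a. L (bas a)) k = L k"
  by (rule lin_eq_on_basis[OF hom_ev_lin_arg]) (simp_all add: hom_ev_bas)

lemma lin_hom_ev_arg_comp: "vector_space sc \<Longrightarrow> lin s1 hsc L \<Longrightarrow> lin s1 sc (\<lambda>x. hom_ev sc f (L x))"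
  by (rule lin_comp[OF _ hom_ev_lin_arg])

lemma lin_hom_ev_fun_comp: "vector_space sc \<Longrightarrow> lin s1 (fsc sc) L \<Longrightarrow> lin s1 sc (\<lambda>x. hom_ev sc (L x) k)"
  by (rule lin_comp[OF _ hom_ev_lin_fun])

lemma hom_act_lin: "vector_space sc \<Longrightarrow> lin (fsc sc) (fsc sc) (hom_act mul sc h)"
  unfolding hom_act_def
  by (rule linI) (simp_all add: fun_eq_iff fsc_def lin_add[OF hom_ev_lin_fun] lin_scale[OF hom_ev_lin_fun, unfolded fsc_def])

lemma lin_hom_act_comp: "vector_space sc \<Longrightarrow> lin s1 (fsc sc) L \<Longrightarrow> lin s1 (fsc sc) (\<lambda>x. hom_act mul sc h (L x))"
  by (rule lin_comp[OF _ hom_act_lin])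

definition sum_entries :: "('i \<Rightarrow>\<^sub>0 'm::zero) \<Rightarrow> ('m \<Rightarrow> 'i \<Rightarrow> 'v) \<Rightarrow> 'v::comm_monoid_add" where
  "sum_entries t \<Psi> = (\<Sum>a\<in>Poly_Mapping.keys t. \<Psi> (Poly_Mapping.lookup t a) a)"

lemma sum_entries_keys:
  assumes "finite K" "Poly_Mapping.keys t \<subseteq> K" "\<And>a. \<Psi> 0 a = 0"
  shows "sum_entries t \<Psi> = (\<Sum>a\<in>K. \<Psi> (Poly_Mapping.lookup t a) a)"
  unfolding sum_entries_def using assms by (intro sum.mono_neutral_left) (auto simp: in_keys_iff)

lemma sum_entries_lin:
  fixes s1 :: "'k::field \<Rightarrow> 'm::ab_group_add \<Rightarrow> 'm" and \<Psi> :: "'m \<Rightarrow> 'i \<Rightarrow> 'v::ab_group_add"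
  assumes vs1: "vector_space s1" and vs2: "vector_space s2" and L: "\<And>a. lin s1 s2 (\<lambda>m. \<Psi> m a)"
  shows "lin (pms s1) s2 (\<lambda>t. sum_entries t \<Psi>)"
proof (rule linI)
  have z: "\<And>a. \<Psi> 0 a = 0" using lin_zero[OF L] .
  fix x y :: "'i \<Rightarrow>\<^sub>0 'm"
  let ?K = "Poly_Mapping.keys x \<union> Poly_Mapping.keys y"
  have K: "finite ?K" "Poly_Mapping.keys (x + y) \<subseteq> ?K" "Poly_Mapping.keys x \<subseteq> ?K" "Poly_Mapping.keys y \<subseteq> ?K"
    using keys_add[of x y] by auto
  show "sum_entries (x + y) \<Psi> = sum_entries x \<Psi> + sum_entries y \<Psi>"
    unfolding sum_entries_keys[where \<Psi>=\<Psi>, OF K(1,2) z] sum_entries_keys[where \<Psi>=\<Psi>, OF K(1,3) z]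
      sum_entries_keys[where \<Psi>=\<Psi>, OF K(1,4) z]
    by (simp add: lookup_add lin_add[OF L] sum.distrib)
next
  have z: "\<And>a. \<Psi> 0 a = 0" using lin_zero[OF L] .
  fix c and x :: "'i \<Rightarrow>\<^sub>0 'm"
  have k: "Poly_Mapping.keys (pms s1 c x) \<subseteq> Poly_Mapping.keys x"
    by (auto simp: in_keys_iff lookup_pms[OF vs1] vs_scale_zero_right[OF vs1])
  show "sum_entries (pms s1 c x) \<Psi> = s2 c (sum_entries x \<Psi>)"
    using sum_entries_keys[where \<Psi>=\<Psi>, OF finite_keys k z]
    by (simp add: sum_entries_def lookup_pms[OF vs1] lin_scale[OF L] vs_scale_sum_right[OF vs2])
qed

lemma sum_entries_single: "\<Psi> 0 a = 0 \<Longrightarrow> sum_entries (Poly_Mapping.single a m) \<Psi> = \<Psi> m a"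
  unfolding sum_entries_def by (cases "m = 0") (simp_all add: lookup_single)

lemma sum_entries_mtens:
  assumes vs1: "vector_space s1" and vs2: "vector_space s2"
    and L: "\<And>a. lin s1 s2 (\<lambda>m. Y m (bas a))" and Y: "lin hsc s2 (Y m)"
  shows "sum_entries (mtens s1 m k) (\<lambda>m a. Y m (bas a)) = Y m k"
proof (rule lin_eq_on_basis[where x=k])
  show "lin hsc s2 (\<lambda>k. sum_entries (mtens s1 m k) (\<lambda>m a. Y m (bas a)))"
    by (rule lin_comp[OF mtens_lin_right[OF vs1] sum_entries_lin[OF vs1 vs2 L]])
  show "lin hsc s2 (Y m)" by (rule Y)
  fix i show "sum_entries (mtens s1 m (bas i)) (\<lambda>m a. Y m (bas a)) = Y m (bas i)"
    by (simp add: mtens_bas[OF vs1] sum_entries_single lin_zero[OF L])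
qed

locale hopf =
  fixes mul :: "('i \<Rightarrow>\<^sub>0 'k::field) \<Rightarrow> ('i \<Rightarrow>\<^sub>0 'k) \<Rightarrow> ('i \<Rightarrow>\<^sub>0 'k)"
    and one :: "'i \<Rightarrow>\<^sub>0 'k"
    and comul :: "('i \<Rightarrow>\<^sub>0 'k) \<Rightarrow> ('i \<times> 'i) \<Rightarrow>\<^sub>0 'k"
    and eps :: "('i \<Rightarrow>\<^sub>0 'k) \<Rightarrow> 'k"
    and S :: "('i \<Rightarrow>\<^sub>0 'k) \<Rightarrow> ('i \<Rightarrow>\<^sub>0 'k)"
  assumes hopf: "hopf_algebra mul one comul eps S"
begin

lemma mul_lin_left: "lin hsc hsc (\<lambda>x. mul x y)"
  using hopf unfolding hopf_algebra_def bilinear_k_def by (auto intro: linear_lin)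
lemma mul_lin_right: "lin hsc hsc (mul x)"
  using hopf unfolding hopf_algebra_def bilinear_k_def by (auto intro: linear_lin)
lemma mul_assoc: "mul (mul x y) z = mul x (mul y z)"
  using hopf unfolding hopf_algebra_def by auto
lemma mul_one_left [simp]: "mul one x = x"
  using hopf unfolding hopf_algebra_def by auto
lemma mul_one_right [simp]: "mul x one = x"
  using hopf unfolding hopf_algebra_def by auto
lemma comul_lin: "lin hsc hsc comul"
  using hopf unfolding hopf_algebra_def by (auto intro: linear_lin)
lemma eps_lin: "lin hsc (*) eps"
  using hopf unfolding hopf_algebra_def by (auto intro: linear_lin)
lemma coassoc_raw: "sw hsc (comul h) (\<lambda>x y. sw hsc (comul x) (\<lambda>u v. tensor3 u v y))
          = sw hsc (comul h) (\<lambda>x y. sw hsc (comul y) (\<lambda>u v. tensor3 x u v))"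
  using hopf unfolding hopf_algebra_def by auto
lemma counit_raw: "sw hsc (comul h) (\<lambda>x y. hsc (eps x) y) = h" "sw hsc (comul h) (\<lambda>x y. hsc (eps y) x) = h"
  using hopf unfolding hopf_algebra_def by auto
lemma comul_mul_raw: "comul (mul h k) = sw hsc (comul h) (\<lambda>a b. sw hsc (comul k) (\<lambda>c d. tensor2 (mul a c) (mul b d)))"
  using hopf unfolding hopf_algebra_def by auto
lemma comul_one_raw: "comul one = tensor2 one one"
  using hopf unfolding hopf_algebra_def by auto
lemma eps_mul: "eps (mul h k) = eps h * eps k"
  using hopf unfolding hopf_algebra_def by auto
lemma eps_one: "eps one = 1"
  using hopf unfolding hopf_algebra_def by auto
lemma S_lin: "lin hsc hsc S"
  using hopf unfolding hopf_algebra_def by (auto intro: linear_lin)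
lemma antipode_raw: "sw hsc (comul h) (\<lambda>a b. mul (S a) b) = hsc (eps h) one"
   "sw hsc (comul h) (\<lambda>a b. mul a (S b)) = hsc (eps h) one"
  using hopf unfolding hopf_algebra_def by auto
lemma bij_S: "bij S"
  using hopf unfolding hopf_algebra_def by auto

lemma lin_sw_comul: "vector_space sc \<Longrightarrow> lin hsc sc (\<lambda>h. sw sc (comul h) F)"
  by (rule lin_comp[OF comul_lin lin_sw_tensor])

lemma coassoc:
  assumes vs: "vector_space sc"
  shows "sw sc (comul h) (\<lambda>x y. sw sc (comul x) (\<lambda>u v. G u v y))
       = sw sc (comul h) (\<lambda>x y. sw sc (comul y) (\<lambda>u v. G x u v))"
proof -
  let ?L = "\<lambda>w. lin_ext sc w (\<lambda>p. G (bas (fst p)) (bas (fst (snd p))) (bas (snd (snd p))))"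
  have L: "lin hsc sc ?L" by (rule lin_lin_ext[OF vs])
  have t3: "?L (tensor3 (bas i) (bas j) (bas l)) = G (bas i) (bas j) (bas l)" for i j l
    by (simp add: tensor3_bas lin_ext_single[OF vs] vs_scale_one[OF vs])
  have "?L (sw hsc (comul h) (\<lambda>x y. sw hsc (comul x) (\<lambda>u v. tensor3 u v y)))
      = ?L (sw hsc (comul h) (\<lambda>x y. sw hsc (comul y) (\<lambda>u v. tensor3 x u v)))"
    by (simp only: coassoc_raw)
  then have e: "sw sc (comul h) (\<lambda>x y. sw sc (comul x) (\<lambda>u v. ?L (tensor3 u v y)))
      = sw sc (comul h) (\<lambda>x y. sw sc (comul y) (\<lambda>u v. ?L (tensor3 x u v)))"
    by (simp only: sw_linear[OF L])
  have e1: "sw sc (comul h) (\<lambda>x y. sw sc (comul x) (\<lambda>u v. ?L (tensor3 u v y)))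
      = sw sc (comul h) (\<lambda>x y. sw sc (comul x) (\<lambda>u v. G u v y))"
    by (rule sw_cong, rule sw_cong, rule t3)
  have e2: "sw sc (comul h) (\<lambda>x y. sw sc (comul y) (\<lambda>u v. ?L (tensor3 x u v)))
      = sw sc (comul h) (\<lambda>x y. sw sc (comul y) (\<lambda>u v. G x u v))"
    by (rule sw_cong, rule sw_cong, rule t3)
  show ?thesis using e e1 e2 by simp
qed

lemma counit_l:
  assumes G: "lin hsc sc G"
  shows "sw sc (comul h) (\<lambda>x y. sc (eps x) (G y)) = G h"
proof -
  have "G h = G (sw hsc (comul h) (\<lambda>x y. hsc (eps x) y))" by (simp only: counit_raw)
  also have "\<dots> = sw sc (comul h) (\<lambda>x y. sc (eps x) (G y))"
    by (simp only: sw_linear[OF G] lin_scale[OF G])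
  finally show ?thesis by simp
qed

lemma counit_r:
  assumes G: "lin hsc sc G"
  shows "sw sc (comul h) (\<lambda>x y. sc (eps y) (G x)) = G h"
proof -
  have "G h = G (sw hsc (comul h) (\<lambda>x y. hsc (eps y) x))" by (simp only: counit_raw)
  also have "\<dots> = sw sc (comul h) (\<lambda>x y. sc (eps y) (G x))"
    by (simp only: sw_linear[OF G] lin_scale[OF G])
  finally show ?thesis by simp
qed

lemma comul_mul:
  assumes vs: "vector_space sc" and F1: "\<And>x. lin hsc sc (F x)" and F2: "\<And>y. lin hsc sc (\<lambda>x. F x y)"
  shows "sw sc (comul (mul h k)) F = sw sc (comul h) (\<lambda>a b. sw sc (comul k) (\<lambda>c d. F (mul a c) (mul b d)))"
proof -
  have L: "lin hsc sc (\<lambda>t. sw sc t F)" by (rule lin_sw_tensor[OF vs])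
  show ?thesis
    unfolding comul_mul_raw
    by (simp only: sw_linear[OF L] sw_tensor2[OF vs F1 F2])
qed

lemma comul_one:
  assumes vs: "vector_space sc" and F1: "\<And>x. lin hsc sc (F x)" and F2: "\<And>y. lin hsc sc (\<lambda>x. F x y)"
  shows "sw sc (comul one) F = F one one"
  unfolding comul_one_raw by (rule sw_tensor2[OF vs F1 F2])

lemma antipode_l:
  assumes G: "lin hsc sc G"
  shows "sw sc (comul h) (\<lambda>a b. G (mul (S a) b)) = sc (eps h) (G one)"
proof -
  have "sw sc (comul h) (\<lambda>a b. G (mul (S a) b)) = G (sw hsc (comul h) (\<lambda>a b. mul (S a) b))"
    by (simp only: sw_linear[OF G])
  also have "\<dots> = sc (eps h) (G one)" by (simp only: antipode_raw lin_scale[OF G])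
  finally show ?thesis .
qed

lemma antipode_r:
  assumes G: "lin hsc sc G"
  shows "sw sc (comul h) (\<lambda>a b. G (mul a (S b))) = sc (eps h) (G one)"
proof -
  have "sw sc (comul h) (\<lambda>a b. G (mul a (S b))) = G (sw hsc (comul h) (\<lambda>a b. mul a (S b)))"
    by (simp only: sw_linear[OF G])
  also have "\<dots> = sc (eps h) (G one)" by (simp only: antipode_raw lin_scale[OF G])
  finally show ?thesis .
qed


lemma lin_mul_left_comp: "lin s1 hsc L \<Longrightarrow> lin s1 hsc (\<lambda>x. mul (L x) y)"
  by (rule lin_comp[OF _ mul_lin_left])

lemma lin_mul_right_comp: "lin s1 hsc L \<Longrightarrow> lin s1 hsc (\<lambda>x. mul y (L x))"
  by (rule lin_comp[OF _ mul_lin_right])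

lemma lin_S_comp: "lin s1 hsc L \<Longrightarrow> lin s1 hsc (\<lambda>x. S (L x))"
  by (rule lin_comp[OF _ S_lin])

lemma lin_sw_comul_comp: "vector_space sc \<Longrightarrow> lin s1 hsc L \<Longrightarrow> lin s1 sc (\<lambda>x. sw sc (comul (L x)) F)"
  by (rule lin_comp[OF _ lin_sw_comul])

lemma lin_eps_scale: "vector_space sc \<Longrightarrow> lin hsc sc (\<lambda>x. sc (eps x) v)"
  using eps_lin unfolding lin_def by (simp add: vs_scale_left_distrib vs_scale_scale)

lemmas lin_H_intros = lin_id lin_mul_left_comp lin_mul_right_comp lin_S_comp
  lin_sw_fun[OF vector_space_hsc] lin_scale_comp[OF vector_space_hsc]
  lin_eps_scale[OF vector_space_hsc] lin_sw_comul_comp[OF vector_space_hsc]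

text \<open>Both \<open>S(y) S(x)\<close> and \<open>S(xy)\<close> equal \<open>S(y\<^sub>1) S(x\<^sub>1) x\<^sub>2 y\<^sub>2 S(x\<^sub>3 y\<^sub>3)\<close>: insert
  \<open>\<epsilon>(x\<^sub>2 y\<^sub>2) = (x\<^sub>2 y\<^sub>2)\<^sub>1 S((x\<^sub>2 y\<^sub>2)\<^sub>2)\<close> into the first, and cancel
  \<open>S(x\<^sub>1) x\<^sub>2\<close>, \<open>S(y\<^sub>1) y\<^sub>2\<close> in the second.\<close>

lemma S_mul_S_expansion:
  "mul (S y) (S x) = sw hsc (comul x) (\<lambda>x1 v. sw hsc (comul v) (\<lambda>x2 x3. sw hsc (comul y) (\<lambda>y1 w.
     sw hsc (comul w) (\<lambda>y2 y3. mul (mul (S y1) (S x1)) (mul (mul x2 y2) (S (mul x3 y3)))))))"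
proof -
  have counit_x: "mul (S y) (S x) = sw hsc (comul x) (\<lambda>x1 x2. hsc (eps x2) (mul (S y) (S x1)))"
    by (rule counit_r[where G="\<lambda>x1. mul (S y) (S x1)", symmetric]) (intro lin_H_intros)
  have counit_y: "\<And>z. mul (S y) (S z) = sw hsc (comul y) (\<lambda>y1 y2. hsc (eps y2) (mul (S y1) (S z)))"
    by (rule counit_r[where G="\<lambda>y1. mul (S y1) (S z)" for z, symmetric]) (intro lin_H_intros)
  have eps_antipode: "\<And>M w. hsc (eps w) M = sw hsc (comul w) (\<lambda>a b. mul M (mul a (S b)))"
    using antipode_r[where G="mul M" for M] by (simp add: lin_H_intros)
  have comul_prod: "\<And>M p q. sw hsc (comul (mul p q)) (\<lambda>a b. mul M (mul a (S b)))
     = sw hsc (comul p) (\<lambda>a b. sw hsc (comul q) (\<lambda>c d. mul M (mul (mul a c) (S (mul b d)))))"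
    by (rule comul_mul[OF vector_space_hsc]) (intro lin_H_intros)+
  note counit_x
  also have "sw hsc (comul x) (\<lambda>x1 x2. hsc (eps x2) (mul (S y) (S x1)))
      = sw hsc (comul x) (\<lambda>x1 x2. sw hsc (comul y) (\<lambda>y1 y2. hsc (eps (mul x2 y2)) (mul (S y1) (S x1))))"
    by (simp only: counit_y sw_scale_fun[OF vector_space_hsc, symmetric] vs_scale_scale[OF vector_space_hsc] eps_mul)
  also have "\<dots> = sw hsc (comul x) (\<lambda>x1 x2. sw hsc (comul y) (\<lambda>y1 y2. sw hsc (comul x2) (\<lambda>a b.
      sw hsc (comul y2) (\<lambda>c d. mul (mul (S y1) (S x1)) (mul (mul a c) (S (mul b d)))))))"
    by (simp only: eps_antipode comul_prod)
  also have "\<dots> = sw hsc (comul x) (\<lambda>x1 v. sw hsc (comul v) (\<lambda>x2 x3. sw hsc (comul y) (\<lambda>y1 w.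
      sw hsc (comul w) (\<lambda>y2 y3. mul (mul (S y1) (S x1)) (mul (mul x2 y2) (S (mul x3 y3)))))))"
    by (simp only: sw_swap[OF vector_space_hsc, of "comul y"])
  finally show ?thesis .
qed

lemma S_mul_expansion:
  "S (mul x y) = sw hsc (comul x) (\<lambda>x1 v. sw hsc (comul v) (\<lambda>x2 x3. sw hsc (comul y) (\<lambda>y1 w.
     sw hsc (comul w) (\<lambda>y2 y3. mul (mul (S y1) (S x1)) (mul (mul x2 y2) (S (mul x3 y3)))))))"
proof -
  have cancel_x: "\<And>u y1 y2 x3 y3. sw hsc (comul u) (\<lambda>x1 x2. mul (mul (S y1) (S x1)) (mul (mul x2 y2) (S (mul x3 y3))))
       = hsc (eps u) (mul (S y1) (mul y2 (S (mul x3 y3))))"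
    using antipode_l[where G="\<lambda>z. mul (S y1) (mul (mul z y2) (S (mul x3 y3)))" for y1 y2 x3 y3]
    by (simp add: lin_H_intros mul_assoc)
  have cancel_y: "\<And>u' y3. sw hsc (comul u') (\<lambda>y1 y2. mul (S y1) (mul y2 (S (mul x y3)))) = hsc (eps u') (S (mul x y3))"
    using antipode_l[where G="\<lambda>z. mul z (S (mul x y3))" for y3] by (simp add: lin_H_intros mul_assoc)
  have swap_xy: "\<And>u u' x3 y3. sw hsc (comul u) (\<lambda>x1 x2. sw hsc (comul u') (\<lambda>y1 y2.
      mul (mul (S y1) (S x1)) (mul (mul x2 y2) (S (mul x3 y3)))))
    = sw hsc (comul u') (\<lambda>y1 y2. sw hsc (comul u) (\<lambda>x1 x2.
      mul (mul (S y1) (S x1)) (mul (mul x2 y2) (S (mul x3 y3)))))"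
    by (rule sw_swap[OF vector_space_hsc])
  have "sw hsc (comul x) (\<lambda>x1 v. sw hsc (comul v) (\<lambda>x2 x3. sw hsc (comul y) (\<lambda>y1 w.
      sw hsc (comul w) (\<lambda>y2 y3. mul (mul (S y1) (S x1)) (mul (mul x2 y2) (S (mul x3 y3)))))))
    = sw hsc (comul x) (\<lambda>u x3. sw hsc (comul u) (\<lambda>x1 x2. sw hsc (comul y) (\<lambda>u' y3. sw hsc (comul u') (\<lambda>y1 y2.
      mul (mul (S y1) (S x1)) (mul (mul x2 y2) (S (mul x3 y3)))))))"
    by (simp only: coassoc[OF vector_space_hsc])
  also have "\<dots> = sw hsc (comul x) (\<lambda>u x3. sw hsc (comul y) (\<lambda>u' y3. sw hsc (comul u) (\<lambda>x1 x2.
      sw hsc (comul u') (\<lambda>y1 y2. mul (mul (S y1) (S x1)) (mul (mul x2 y2) (S (mul x3 y3)))))))"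
    by (simp only: sw_swap[OF vector_space_hsc, of "comul u" "comul y" for u])
  also have "\<dots> = sw hsc (comul x) (\<lambda>u x3. sw hsc (comul y) (\<lambda>u' y3. sw hsc (comul u') (\<lambda>y1 y2.
      sw hsc (comul u) (\<lambda>x1 x2. mul (mul (S y1) (S x1)) (mul (mul x2 y2) (S (mul x3 y3)))))))"
    by (simp only: swap_xy)
  also have "\<dots> = sw hsc (comul x) (\<lambda>u x3. hsc (eps u) (sw hsc (comul y) (\<lambda>u' y3. sw hsc (comul u') (\<lambda>y1 y2.
      mul (S y1) (mul y2 (S (mul x3 y3)))))))"
    by (simp only: cancel_x sw_scale_fun[OF vector_space_hsc])
  also have "\<dots> = sw hsc (comul y) (\<lambda>u' y3. sw hsc (comul u') (\<lambda>y1 y2. mul (S y1) (mul y2 (S (mul x y3)))))"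
    by (rule counit_l) (intro lin_H_intros)
  also have "\<dots> = S (mul x y)"
    unfolding cancel_y by (rule counit_l) (intro lin_H_intros)
  finally show ?thesis by simp
qed

lemma S_antimult: "S (mul x y) = mul (S y) (S x)"
  using S_mul_expansion S_mul_S_expansion by (rule trans[OF _ sym])

lemma S_one: "S one = one"
proof -
  have "sw hsc (comul one) (\<lambda>a b. mul (S a) b) = mul (S one) one"
    by (rule comul_one[OF vector_space_hsc]) (intro lin_H_intros)+
  then show ?thesis using antipode_raw(1)[of one] by (simp add: eps_one vs_scale_one[OF vector_space_hsc])
qed

definition Sinv where "Sinv = inv S"

lemma S_Sinv: "S (Sinv x) = x"
  unfolding Sinv_def using bij_S by (simp add: bij_is_surj surj_f_inv_f)

lemma S_inj: "S x = S y \<Longrightarrow> x = y"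
  using bij_S by (simp add: bij_is_inj inj_eq)

text \<open>This is where bijectivity of \<open>S\<close> enters: \<open>S\<^sup>-\<^sup>1\<close> is the antipode of \<open>H\<^sup>c\<^sup>o\<^sup>p\<close>.\<close>

lemma Sinv_antipode_raw: "sw hsc (comul l) (\<lambda>a b. mul (Sinv b) a) = hsc (eps l) one"
proof (rule S_inj)
  have "S (sw hsc (comul l) (\<lambda>a b. mul (Sinv b) a)) = sw hsc (comul l) (\<lambda>a b. mul (S a) b)"
    by (simp only: sw_linear[OF S_lin] S_antimult S_Sinv)
  also have "\<dots> = S (hsc (eps l) one)" by (simp add: antipode_raw(1) lin_scale[OF S_lin] S_one)
  finally show "S (sw hsc (comul l) (\<lambda>a b. mul (Sinv b) a)) = S (hsc (eps l) one)" .
qed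

lemma Sinv_antipode:
  assumes G: "lin hsc sc G"
  shows "sw sc (comul h) (\<lambda>a b. G (mul (Sinv b) a)) = sc (eps h) (G one)"
  by (simp only: sw_linear[OF G, symmetric] Sinv_antipode_raw lin_scale[OF G])

lemma hom_ev_hom_act: "vector_space sc \<Longrightarrow> hom_ev sc (hom_act mul sc h f) k = hom_ev sc f (mul k h)"
  by (rule lin_eq_on_basis[OF hom_ev_lin_arg lin_hom_ev_arg_comp[OF _ lin_mul_left_comp[OF lin_id]]])
     (simp_all add: hom_ev_bas hom_act_def)

lemma hom_act_mul: "vector_space sc \<Longrightarrow> hom_act mul sc h (hom_act mul sc h' f) = hom_act mul sc (mul h h') f"
  by (simp add: hom_act_def[of mul sc h "hom_act mul sc h' f"] hom_act_def[of mul sc "mul h h'" f]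
      hom_ev_hom_act mul_assoc fun_eq_iff)

lemma hom_act_one: "vector_space sc \<Longrightarrow> hom_act mul sc one f = f"
  by (simp add: hom_act_def hom_ev_bas fun_eq_iff)

lemma hom_act_lin_in_action: "vector_space sc \<Longrightarrow> lin hsc (fsc sc) (\<lambda>h. hom_act mul sc h f)"
  unfolding hom_act_def lin_def fsc_def
  by (simp add: fun_eq_iff lin_add[OF lin_hom_ev_arg_comp[OF _ lin_mul_right_comp[OF lin_id]]]
      lin_scale[OF lin_hom_ev_arg_comp[OF _ lin_mul_right_comp[OF lin_id]]])

lemma hom_ev_dil_phi: "vector_space sc \<Longrightarrow> lin hsc sc (\<lambda>h. \<pi> h m) \<Longrightarrow> hom_ev sc (dil_phi \<pi> m) k = \<pi> k m"
  unfolding dil_phi_def by (rule hom_ev_basis_restriction)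

lemma subspace_std_dilation: "vector_space sc \<Longrightarrow> module.subspace (fsc sc) (std_dilation mul sc \<pi> M)"
  unfolding std_dilation_def by (rule vs_subspace_span[OF vector_space_fsc])

lemma std_dilation_generator:
  "vector_space sc \<Longrightarrow> m \<in> M \<Longrightarrow> hom_act mul sc h (dil_phi \<pi> m) \<in> std_dilation mul sc \<pi> M"
  unfolding std_dilation_def by (rule span_in_generators[OF vector_space_fsc]) auto

lemma std_dilation_hom_act_closed:
  assumes vs: "vector_space sc" and x: "x \<in> std_dilation mul sc \<pi> M"
  shows "hom_act mul sc h x \<in> std_dilation mul sc \<pi> M"
  using x unfolding std_dilation_def
proof (rule lin_span_into_subspace[OF vector_space_fsc[OF vs] vector_space_fsc[OF vs] hom_act_lin[OF vs]])
  show "module.subspace (fsc sc) (module.span (fsc sc) {hom_act mul sc h (dil_phi \<pi> m) |h m. m \<in> M})"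
    by (rule vs_subspace_span[OF vector_space_fsc[OF vs]])
  fix g assume "g \<in> {hom_act mul sc h (dil_phi \<pi> m) |h m. m \<in> M}"
  then obtain h' m where "g = hom_act mul sc h' (dil_phi \<pi> m)" "m \<in> M" by blast
  then show "hom_act mul sc h g \<in> module.span (fsc sc) {hom_act mul sc h (dil_phi \<pi> m) |h m. m \<in> M}"
    by (intro span_in_generators[OF vector_space_fsc[OF vs]]) (auto simp: hom_act_mul[OF vs])
qed

end

locale partial_hopf_action = hopf mul one comul eps S
  for mul :: "('i \<Rightarrow>\<^sub>0 'k::field) \<Rightarrow> ('i \<Rightarrow>\<^sub>0 'k) \<Rightarrow> ('i \<Rightarrow>\<^sub>0 'k)"
    and one :: "'i \<Rightarrow>\<^sub>0 'k"
    and comul :: "('i \<Rightarrow>\<^sub>0 'k) \<Rightarrow> ('i \<times> 'i) \<Rightarrow>\<^sub>0 'k"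
    and eps :: "('i \<Rightarrow>\<^sub>0 'k) \<Rightarrow> 'k"
    and S :: "('i \<Rightarrow>\<^sub>0 'k) \<Rightarrow> ('i \<Rightarrow>\<^sub>0 'k)" +
  fixes sB :: "'k \<Rightarrow> 'B::ring_1 \<Rightarrow> 'B"
    and act :: "('i \<Rightarrow>\<^sub>0 'k) \<Rightarrow> 'B \<Rightarrow> 'B"
  assumes kalg: "k_algebra sB"
    and spa: "sym_partial_action mul one comul sB act"
begin

lemma vector_space_B: "vector_space sB" using kalg by (simp add: k_algebra_def)
lemma vector_space_BH: "vector_space (pms sB)" by (rule vector_space_pms[OF vector_space_B])
lemma vector_space_Hom_B: "vector_space (fsc sB)" by (rule vector_space_fsc[OF vector_space_B])
lemma vector_space_Hom_BH: "vector_space (fsc (pms sB))" by (rule vector_space_fsc[OF vector_space_BH])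
lemma vector_space_smash: "vector_space (pms (fsc sB))" by (rule vector_space_pms[OF vector_space_Hom_B])

lemma mult_lin_left: "lin sB sB (\<lambda>x. x * b)"
proof -
  have h: "\<And>c x y. sB c (x * y) = sB c x * y" using kalg unfolding k_algebra_def by blast
  show ?thesis by (intro linI) (simp_all only: h distrib_right)
qed
lemma mult_lin_right: "lin sB sB (\<lambda>x. b * x)"
proof -
  have h: "\<And>c x y. sB c (x * y) = x * sB c y" using kalg unfolding k_algebra_def by blast
  show ?thesis by (intro linI) (simp_all only: h distrib_left)
qed

lemma act_lin_left: "lin hsc sB (\<lambda>h. act h b)"
  using spa unfolding sym_partial_action_def bilinear_k_def by (auto intro: linear_lin)
lemma act_lin_right: "lin sB sB (act h)"
  using spa unfolding sym_partial_action_def bilinear_k_def by (auto intro: linear_lin)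
lemma act_mult: "act h (a * b) = sw sB (comul h) (\<lambda>x y. act x a * act y b)"
  using spa unfolding sym_partial_action_def by auto
lemma act_act_unit_left: "act h (act k a) = sw sB (comul h) (\<lambda>x y. act x 1 * act (mul y k) a)"
  using spa unfolding sym_partial_action_def by auto

lemma lin_act_left_comp: "lin s1 hsc L \<Longrightarrow> lin s1 sB (\<lambda>x. act (L x) b)"
  by (rule lin_comp[OF _ act_lin_left])
lemma lin_act_right_comp: "lin s1 sB L \<Longrightarrow> lin s1 sB (\<lambda>x. act h (L x))"
  by (rule lin_comp[OF _ act_lin_right])
lemma lin_mult_left_comp: "lin s1 sB L \<Longrightarrow> lin s1 sB (\<lambda>x. L x * b)"
  by (rule lin_comp[OF _ mult_lin_left])
lemma lin_mult_right_comp: "lin s1 sB L \<Longrightarrow> lin s1 sB (\<lambda>x. b * L x)"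
  by (rule lin_comp[OF _ mult_lin_right])

lemmas lin_intros = lin_id lin_act_left_comp lin_act_right_comp lin_mult_left_comp lin_mult_right_comp
  lin_mul_left_comp lin_mul_right_comp lin_S_comp
  lin_mtens_left_comp[OF vector_space_B] lin_mtens_right_comp[OF vector_space_B]
  lin_mtens_left_comp[OF vector_space_Hom_B] lin_mtens_right_comp[OF vector_space_Hom_B]
  lin_sw_fun[OF vector_space_B] lin_sw_fun[OF vector_space_BH] lin_sw_fun[OF vector_space_hsc]
  lin_sw_fun[OF vector_space_smash] lin_sw_fun[OF vector_space_Hom_BH]
  lin_sw_comul_comp[OF vector_space_B] lin_sw_comul_comp[OF vector_space_BH]
  lin_sw_comul_comp[OF vector_space_hsc]
  lin_hom_ev_arg_comp[OF vector_space_B] lin_hom_ev_arg_comp[OF vector_space_BH]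
  lin_hom_ev_fun_comp[OF vector_space_B] lin_hom_act_comp[OF vector_space_B]
  lin_scale_comp[OF vector_space_B] lin_scale_comp[OF vector_space_BH]
  lin_eps_scale[OF vector_space_B] lin_eps_scale[OF vector_space_BH]

lemma BH_pi_as_sum_entries: "BH_pi mul comul sB act h t = sum_entries t (\<lambda>m a. sw (pms sB) (comul h) (\<lambda>x y. mtens sB (act x m) (mul y (bas a))))"
  unfolding BH_pi_def sum_entries_def ..

lemma BH_pi_lin: "lin (pms sB) (pms sB) (BH_pi mul comul sB act h)"
  unfolding BH_pi_as_sum_entries by (rule sum_entries_lin[OF vector_space_B vector_space_BH]) (intro lin_intros)

lemma BH_pi_mtens: "BH_pi mul comul sB act h (mtens sB b k) = sw (pms sB) (comul h) (\<lambda>x y. mtens sB (act x b) (mul y k))"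
  unfolding BH_pi_as_sum_entries
  by (rule sum_entries_mtens[OF vector_space_B vector_space_BH,
        where Y="\<lambda>b k. sw (pms sB) (comul h) (\<lambda>x y. mtens sB (act x b) (mul y k))"]) (intro lin_intros)+

lemma smash_act_as_sum_entries: "smash_act mul comul sB h t
    = sum_entries t (\<lambda>f a. sw (pms (fsc sB)) (comul h) (\<lambda>x y. mtens (fsc sB) (hom_act mul sB x f) (mul y (bas a))))"
  unfolding smash_act_def sum_entries_def ..

lemma smash_act_lin: "lin (pms (fsc sB)) (pms (fsc sB)) (smash_act mul comul sB h)"
  unfolding smash_act_as_sum_entries
  by (rule sum_entries_lin[OF vector_space_Hom_B vector_space_smash]) (intro lin_intros)

lemma smash_act_mtens: "smash_act mul comul sB h (mtens (fsc sB) f k)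
   = sw (pms (fsc sB)) (comul h) (\<lambda>x y. mtens (fsc sB) (hom_act mul sB x f) (mul y k))"
  unfolding smash_act_as_sum_entries
  by (rule sum_entries_mtens[OF vector_space_Hom_B vector_space_smash,
        where Y="\<lambda>f k. sw (pms (fsc sB)) (comul h) (\<lambda>x y. mtens (fsc sB) (hom_act mul sB x f) (mul y k))"])
     (intro lin_intros)+

end

section \<open>The projection of \<open>B \<otimes> H\<close> onto the partial smash product\<close>

context partial_hopf_action begin

definition smash_proj :: "('i \<Rightarrow>\<^sub>0 'B) \<Rightarrow> ('i \<Rightarrow>\<^sub>0 'B)" where
  "smash_proj m = sum_entries m (\<lambda>b a. psmash_elt comul sB act b (bas a))"

lemma smash_proj_lin: "lin (pms sB) (pms sB) smash_proj"
  unfolding smash_proj_def psmash_elt_def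
  by (rule sum_entries_lin[OF vector_space_B vector_space_BH]) (intro lin_intros)

lemma smash_proj_mtens: "smash_proj (mtens sB b k) = sw (pms sB) (comul k) (\<lambda>x y. mtens sB (b * act x 1) y)"
  unfolding smash_proj_def psmash_elt_def
  by (rule sum_entries_mtens[OF vector_space_B vector_space_BH,
        where Y="\<lambda>b k. sw (pms sB) (comul k) (\<lambda>x y. mtens sB (b * act x 1) y)"]) (intro lin_intros)+

lemma psmash_elt_eq_smash_proj: "psmash_elt comul sB act b k = smash_proj (mtens sB b k)"
  unfolding smash_proj_mtens psmash_elt_def ..

lemma sw_act_mult:
  assumes G: "lin sB sc G"
  shows "sw sc (comul w) (\<lambda>x1 p. G (act x1 b * act p c)) = G (act w (b * c))"
  by (simp only: act_mult sw_linear[OF G])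

lemma act_mult_act_unit: "act h (b * act k 1) = sw sB (comul h) (\<lambda>w q. act w b * act (mul q k) 1)"
proof -
  have "act h (b * act k 1) = sw sB (comul h) (\<lambda>x1 x2. sw sB (comul x2) (\<lambda>p q. act x1 b * (act p 1 * act (mul q k) 1)))"
    by (simp only: act_mult act_act_unit_left sw_linear[OF mult_lin_right])
  also have "\<dots> = sw sB (comul h) (\<lambda>w q. sw sB (comul w) (\<lambda>x1 p. act x1 b * (act p 1 * act (mul q k) 1)))"
    by (rule coassoc[OF vector_space_B, symmetric])
  also have "\<dots> = sw sB (comul h) (\<lambda>w q. act w b * act (mul q k) 1)"
    using sw_act_mult[where sc=sB and G="\<lambda>z. z * act (mul q k) 1" and b=b and c=1 for q]
    by (simp add: mult.assoc lin_intros)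
  finally show ?thesis .
qed

lemma smash_proj_idem: "smash_proj (smash_proj m) = smash_proj m"
proof (rule lin_eq_on_singles[where t=m])
  show "lin (pms sB) (pms sB) (\<lambda>m. smash_proj (smash_proj m))"
    by (rule lin_comp[OF smash_proj_lin smash_proj_lin])
  show "lin (pms sB) (pms sB) smash_proj" by (rule smash_proj_lin)
  fix a :: 'i and b :: 'B
  have "smash_proj (smash_proj (mtens sB b (bas a)))
      = sw (pms sB) (comul (bas a)) (\<lambda>a1 a2. sw (pms sB) (comul a2) (\<lambda>u v. mtens sB (b * act a1 1 * act u 1) v))"
    by (simp only: smash_proj_mtens sw_linear[OF smash_proj_lin])
  also have "\<dots> = sw (pms sB) (comul (bas a)) (\<lambda>w v. sw (pms sB) (comul w) (\<lambda>a1 u. mtens sB (b * act a1 1 * act u 1) v))"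
    by (rule coassoc[OF vector_space_BH, symmetric])
  also have "\<dots> = sw (pms sB) (comul (bas a)) (\<lambda>w v. mtens sB (b * act w 1) v)"
  proof -
    have collapse: "\<And>w v. sw (pms sB) (comul w) (\<lambda>a1 u. mtens sB (b * act a1 1 * act u 1) v) = mtens sB (b * act w 1) v"
      using sw_act_mult[where sc="pms sB" and G="\<lambda>z. mtens sB (b * z) v" and b=1 and c=1 for v]
      by (simp add: mult.assoc lin_intros)
    show ?thesis by (simp only: collapse)
  qed
  also have "\<dots> = smash_proj (mtens sB b (bas a))" by (simp only: smash_proj_mtens)
  finally show "smash_proj (smash_proj (Poly_Mapping.single a b)) = smash_proj (Poly_Mapping.single a b)"
    by (simp add: mtens_bas[OF vector_space_B])
qed

text \<open>Both sides of \<open>smash_proj_BH_pi\<close> on \<open>b \<otimes> a\<close> equal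
  \<open>(h\<^sub>1 \<cdot> b)(h\<^sub>2 a\<^sub>1 \<cdot> 1) \<otimes> h\<^sub>3 a\<^sub>2\<close>.\<close>

lemma smash_proj_BH_pi_mtens:
  "smash_proj (BH_pi mul comul sB act h (mtens sB b k)) = sw (pms sB) (comul h) (\<lambda>x y. sw (pms sB) (comul x)
     (\<lambda>w q. sw (pms sB) (comul k) (\<lambda>a1 a2. mtens sB (act w b * act (mul q a1) 1) (mul y a2))))"
proof -
  have comul_prod: "\<And>x y. sw (pms sB) (comul (mul y k)) (\<lambda>u v. mtens sB (act x b * act u 1) v)
     = sw (pms sB) (comul y) (\<lambda>y1 y2. sw (pms sB) (comul k) (\<lambda>a1 a2. mtens sB (act x b * act (mul y1 a1) 1) (mul y2 a2)))"
    by (rule comul_mul[OF vector_space_BH]) (intro lin_intros)+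
  have "smash_proj (BH_pi mul comul sB act h (mtens sB b k))
      = sw (pms sB) (comul h) (\<lambda>x y. sw (pms sB) (comul y) (\<lambda>y1 y2. sw (pms sB) (comul k)
          (\<lambda>a1 a2. mtens sB (act x b * act (mul y1 a1) 1) (mul y2 a2))))"
    by (simp only: BH_pi_mtens sw_linear[OF smash_proj_lin] smash_proj_mtens comul_prod)
  also have "\<dots> = sw (pms sB) (comul h) (\<lambda>x y. sw (pms sB) (comul x) (\<lambda>w q. sw (pms sB) (comul k)
          (\<lambda>a1 a2. mtens sB (act w b * act (mul q a1) 1) (mul y a2))))"
    by (rule coassoc[OF vector_space_BH, symmetric])
  finally show ?thesis .
qed

lemma BH_pi_smash_proj_mtens:
  "BH_pi mul comul sB act h (smash_proj (mtens sB b k)) = sw (pms sB) (comul h) (\<lambda>x y. sw (pms sB) (comul x)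
     (\<lambda>w q. sw (pms sB) (comul k) (\<lambda>a1 a2. mtens sB (act w b * act (mul q a1) 1) (mul y a2))))"
proof -
  have expand: "\<And>x a1 y a2. mtens sB (act x (b * act a1 1)) (mul y a2)
      = sw (pms sB) (comul x) (\<lambda>w q. mtens sB (act w b * act (mul q a1) 1) (mul y a2))"
    by (simp only: act_mult_act_unit sw_linear[OF mtens_lin_left[OF vector_space_B]])
  have swap_inner: "\<And>x y. sw (pms sB) (comul k) (\<lambda>a1 a2. sw (pms sB) (comul x) (\<lambda>w q.
      mtens sB (act w b * act (mul q a1) 1) (mul y a2))) = sw (pms sB) (comul x) (\<lambda>w q. sw (pms sB) (comul k)
      (\<lambda>a1 a2. mtens sB (act w b * act (mul q a1) 1) (mul y a2)))"
    by (rule sw_swap[OF vector_space_BH])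
  have "BH_pi mul comul sB act h (smash_proj (mtens sB b k))
      = sw (pms sB) (comul k) (\<lambda>a1 a2. sw (pms sB) (comul h) (\<lambda>x y. sw (pms sB) (comul x)
          (\<lambda>w q. mtens sB (act w b * act (mul q a1) 1) (mul y a2))))"
    by (simp only: smash_proj_mtens sw_linear[OF BH_pi_lin] BH_pi_mtens expand)
  also have "\<dots> = sw (pms sB) (comul h) (\<lambda>x y. sw (pms sB) (comul k) (\<lambda>a1 a2. sw (pms sB) (comul x)
          (\<lambda>w q. mtens sB (act w b * act (mul q a1) 1) (mul y a2))))"
    by (rule sw_swap[OF vector_space_BH])
  also have "\<dots> = sw (pms sB) (comul h) (\<lambda>x y. sw (pms sB) (comul x) (\<lambda>w q. sw (pms sB) (comul k)
          (\<lambda>a1 a2. mtens sB (act w b * act (mul q a1) 1) (mul y a2))))"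
    by (simp only: swap_inner)
  finally show ?thesis .
qed

lemma smash_proj_BH_pi: "smash_proj (BH_pi mul comul sB act h m) = BH_pi mul comul sB act h (smash_proj m)"
proof (rule lin_eq_on_singles[where t=m])
  show "lin (pms sB) (pms sB) (\<lambda>m. smash_proj (BH_pi mul comul sB act h m))"
    by (rule lin_comp[OF BH_pi_lin smash_proj_lin])
  show "lin (pms sB) (pms sB) (\<lambda>m. BH_pi mul comul sB act h (smash_proj m))"
    by (rule lin_comp[OF smash_proj_lin BH_pi_lin])
  fix a :: 'i and b :: 'B
  show "smash_proj (BH_pi mul comul sB act h (Poly_Mapping.single a b))
      = BH_pi mul comul sB act h (smash_proj (Poly_Mapping.single a b))"
    using smash_proj_BH_pi_mtens[of h b "bas a"] BH_pi_smash_proj_mtens[of h b "bas a"]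
    by (simp add: mtens_bas[OF vector_space_B])
qed

lemma smash_proj_in_psmash: "smash_proj m \<in> psmash comul sB act"
  unfolding smash_proj_def sum_entries_def psmash_def
  by (intro vs_subspace_sum[OF vector_space_BH vs_subspace_span[OF vector_space_BH]]
      span_in_generators[OF vector_space_BH]) blast

lemma smash_proj_fixes_psmash: "m \<in> psmash comul sB act \<Longrightarrow> smash_proj m = m"
  unfolding psmash_def
  by (rule lin_fixes_span[OF vector_space_BH smash_proj_lin]) (auto simp: psmash_elt_eq_smash_proj smash_proj_idem)

definition hom_smash_proj :: "('i \<Rightarrow> ('i \<Rightarrow>\<^sub>0 'B)) \<Rightarrow> ('i \<Rightarrow> ('i \<Rightarrow>\<^sub>0 'B))" where
  "hom_smash_proj g = (\<lambda>l. smash_proj (g l))"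

lemma hom_smash_proj_lin: "lin (fsc (pms sB)) (fsc (pms sB)) hom_smash_proj"
  unfolding hom_smash_proj_def
  by (intro linI ext) (simp_all add: fsc_apply plus_fun_def lin_add[OF smash_proj_lin] lin_scale[OF smash_proj_lin])

lemma hom_smash_proj_hom_act: "hom_smash_proj (hom_act mul (pms sB) h g) = hom_act mul (pms sB) h (hom_smash_proj g)"
  unfolding hom_smash_proj_def hom_act_def hom_ev_def by (simp add: lin_sum[OF smash_proj_lin] lin_scale[OF smash_proj_lin])

lemma hom_smash_proj_dil_phi:
  "hom_smash_proj (dil_phi (BH_pi mul comul sB act) m) = dil_phi (BH_pi mul comul sB act) (smash_proj m)"
  unfolding hom_smash_proj_def dil_phi_def by (simp add: smash_proj_BH_pi)

abbreviation "dilation_BH M \<equiv> std_dilation mul (pms sB) (BH_pi mul comul sB act) M"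

lemma hom_smash_proj_dilation: "x \<in> dilation_BH UNIV \<Longrightarrow> hom_smash_proj x \<in> dilation_BH (psmash comul sB act)"
  unfolding std_dilation_def[of _ _ _ UNIV]
proof (erule lin_span_into_subspace[OF vector_space_Hom_BH vector_space_Hom_BH hom_smash_proj_lin])
  show "module.subspace (fsc (pms sB)) (dilation_BH (psmash comul sB act))"
    by (rule subspace_std_dilation[OF vector_space_BH])
  fix g assume "g \<in> {hom_act mul (pms sB) h (dil_phi (BH_pi mul comul sB act) m) |h m. m \<in> UNIV}"
  then obtain h m where "g = hom_act mul (pms sB) h (dil_phi (BH_pi mul comul sB act) m)" by blast
  then show "hom_smash_proj g \<in> dilation_BH (psmash comul sB act)"
    by (simp add: hom_smash_proj_hom_act hom_smash_proj_dil_phi std_dilation_generator[OF vector_space_BH]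
        smash_proj_in_psmash)
qed

lemma hom_smash_proj_fixes_dilation: "x \<in> dilation_BH (psmash comul sB act) \<Longrightarrow> hom_smash_proj x = x"
  unfolding std_dilation_def
  by (erule lin_fixes_span[OF vector_space_Hom_BH hom_smash_proj_lin])
     (auto simp: hom_smash_proj_hom_act hom_smash_proj_dil_phi smash_proj_fixes_psmash)

end

section \<open>Comparing the smash product with the dilation of \<open>B \<otimes> H\<close>\<close>

context partial_hopf_action begin

text \<open>\<open>smash_to_hom (f # a)\<close> is the map \<open>k \<mapsto> f(k\<^sub>1) \<otimes> k\<^sub>2 a\<close> in \<open>Hom(H, B \<otimes> H)\<close>.\<close>

definition smash_to_hom_at :: "('i \<Rightarrow>\<^sub>0 ('i \<Rightarrow> 'B)) \<Rightarrow> ('i \<Rightarrow>\<^sub>0 'k) \<Rightarrow> ('i \<Rightarrow>\<^sub>0 'B)" where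
  "smash_to_hom_at t k = sum_entries t (\<lambda>f a. sw (pms sB) (comul k) (\<lambda>x y. mtens sB (hom_ev sB f x) (mul y (bas a))))"

definition smash_to_hom :: "('i \<Rightarrow>\<^sub>0 ('i \<Rightarrow> 'B)) \<Rightarrow> ('i \<Rightarrow> ('i \<Rightarrow>\<^sub>0 'B))" where
  "smash_to_hom t = (\<lambda>l. smash_to_hom_at t (bas l))"

lemma smash_to_hom_at_lin: "lin (pms (fsc sB)) (pms sB) (\<lambda>t. smash_to_hom_at t k)"
  unfolding smash_to_hom_at_def
  by (rule sum_entries_lin[OF vector_space_Hom_B vector_space_BH]) (intro lin_intros)

lemma smash_to_hom_at_lin_arg: "lin hsc (pms sB) (smash_to_hom_at t)"
  unfolding smash_to_hom_at_def sum_entries_def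
  by (intro lin_sum_fun[OF vector_space_BH] lin_sw_comul_comp[OF vector_space_BH] lin_id)

lemma smash_to_hom_at_mtens: "smash_to_hom_at (mtens (fsc sB) f k') k = sw (pms sB) (comul k) (\<lambda>x y. mtens sB (hom_ev sB f x) (mul y k'))"
  unfolding smash_to_hom_at_def
  by (rule sum_entries_mtens[OF vector_space_Hom_B vector_space_BH,
        where Y="\<lambda>f k'. sw (pms sB) (comul k) (\<lambda>x y. mtens sB (hom_ev sB f x) (mul y k'))"])
     (intro lin_intros)+

lemma hom_ev_smash_to_hom: "hom_ev (pms sB) (smash_to_hom t) k = smash_to_hom_at t k"
  unfolding smash_to_hom_def by (rule hom_ev_basis_restriction[OF vector_space_BH smash_to_hom_at_lin_arg])

lemma smash_to_hom_lin: "lin (pms (fsc sB)) (fsc (pms sB)) smash_to_hom"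
  unfolding smash_to_hom_def by (intro linI ext) (simp_all add: fsc_apply plus_fun_def lin_add[OF smash_to_hom_at_lin] lin_scale[OF smash_to_hom_at_lin])

lemma smash_to_hom_smash_act: "smash_to_hom (smash_act mul comul sB h t) = hom_act mul (pms sB) h (smash_to_hom t)"
proof (rule lin_eq_on_singles[where t=t])
  show "lin (pms (fsc sB)) (fsc (pms sB)) (\<lambda>t. smash_to_hom (smash_act mul comul sB h t))"
    by (rule lin_comp[OF smash_act_lin smash_to_hom_lin])
  show "lin (pms (fsc sB)) (fsc (pms sB)) (\<lambda>t. hom_act mul (pms sB) h (smash_to_hom t))"
    by (rule lin_comp[OF smash_to_hom_lin hom_act_lin[OF vector_space_BH]])
  fix a :: 'i and f :: "'i \<Rightarrow> 'B"
  have sm: "Poly_Mapping.single a f = mtens (fsc sB) f (bas a)" by (simp add: mtens_bas[OF vector_space_Hom_B])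
  show "smash_to_hom (smash_act mul comul sB h (Poly_Mapping.single a f)) = hom_act mul (pms sB) h (smash_to_hom (Poly_Mapping.single a f))"
  proof (rule ext)
    fix l
    have "smash_to_hom (smash_act mul comul sB h (Poly_Mapping.single a f)) l
       = sw (pms sB) (comul h) (\<lambda>x y. sw (pms sB) (comul (bas l)) (\<lambda>u v. mtens sB (hom_ev sB (hom_act mul sB x f) u) (mul v (mul y (bas a)))))"
      unfolding sm smash_act_mtens smash_to_hom_def by (simp only: sw_linear[OF smash_to_hom_at_lin] smash_to_hom_at_mtens)
    also have "\<dots> = sw (pms sB) (comul h) (\<lambda>x y. sw (pms sB) (comul (bas l)) (\<lambda>u v. mtens sB (hom_ev sB f (mul u x)) (mul (mul v y) (bas a))))"
      by (simp only: hom_ev_hom_act[OF vector_space_B] mul_assoc)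
    also have "\<dots> = sw (pms sB) (comul (bas l)) (\<lambda>u v. sw (pms sB) (comul h) (\<lambda>x y. mtens sB (hom_ev sB f (mul u x)) (mul (mul v y) (bas a))))"
      by (rule sw_swap[OF vector_space_BH])
    also have "\<dots> = sw (pms sB) (comul (mul (bas l) h)) (\<lambda>x y. mtens sB (hom_ev sB f x) (mul y (bas a)))"
      by (rule comul_mul[OF vector_space_BH, symmetric]) (intro lin_intros)+
    also have "\<dots> = hom_act mul (pms sB) h (smash_to_hom (Poly_Mapping.single a f)) l"
      unfolding hom_act_def hom_ev_smash_to_hom sm smash_to_hom_at_mtens ..
    finally show "smash_to_hom (smash_act mul comul sB h (Poly_Mapping.single a f)) l = hom_act mul (pms sB) h (smash_to_hom (Poly_Mapping.single a f)) l" .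
  qed
qed

text \<open>\<open>smash_to_hom\<close> has a left inverse: multiplying the \<open>H\<close>-factor of its value at \<open>l\<^sub>1\<close>
  by \<open>S\<^sup>-\<^sup>1(l\<^sub>2)\<close> recovers the entries \<open>f(l)\<close>.\<close>

definition mul_H_factor :: "('i \<Rightarrow>\<^sub>0 'k) \<Rightarrow> ('i \<Rightarrow>\<^sub>0 'B) \<Rightarrow> ('i \<Rightarrow>\<^sub>0 'B)" where
  "mul_H_factor y m = sum_entries m (\<lambda>b a. mtens sB b (mul y (bas a)))"

lemma mul_H_factor_lin: "lin (pms sB) (pms sB) (mul_H_factor y)"
  unfolding mul_H_factor_def by (rule sum_entries_lin[OF vector_space_B vector_space_BH]) (intro lin_intros)

lemma mul_H_factor_mtens: "mul_H_factor y (mtens sB b k) = mtens sB b (mul y k)"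
  unfolding mul_H_factor_def
  by (rule sum_entries_mtens[OF vector_space_B vector_space_BH, where Y="\<lambda>b k. mtens sB b (mul y k)"]) (intro lin_intros)+

lemma mul_H_factor_Sinv_recovers:
  "sw (pms sB) (comul (bas l)) (\<lambda>p q. mul_H_factor (Sinv q) (sw (pms sB) (comul p) (\<lambda>x y. mtens sB (hom_ev sB f x) (mul y (bas a)))))
   = Poly_Mapping.single a (f l)"
proof -
  have "sw (pms sB) (comul (bas l)) (\<lambda>p q. mul_H_factor (Sinv q) (sw (pms sB) (comul p) (\<lambda>x y. mtens sB (hom_ev sB f x) (mul y (bas a)))))
     = sw (pms sB) (comul (bas l)) (\<lambda>p q. sw (pms sB) (comul p) (\<lambda>x y. mtens sB (hom_ev sB f x) (mul (Sinv q) (mul y (bas a)))))"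
    by (simp only: sw_linear[OF mul_H_factor_lin] mul_H_factor_mtens)
  also have "\<dots> = sw (pms sB) (comul (bas l)) (\<lambda>x r. sw (pms sB) (comul r) (\<lambda>y q. mtens sB (hom_ev sB f x) (mul (Sinv q) (mul y (bas a)))))"
    by (rule coassoc[OF vector_space_BH])
  also have "\<dots> = sw (pms sB) (comul (bas l)) (\<lambda>x r. pms sB (eps r) (mtens sB (hom_ev sB f x) (bas a)))"
  proof -
    have cancel_Sinv: "\<And>x r. sw (pms sB) (comul r) (\<lambda>y q. mtens sB (hom_ev sB f x) (mul (Sinv q) (mul y (bas a))))
        = pms sB (eps r) (mtens sB (hom_ev sB f x) (bas a))"
      using Sinv_antipode[where G="\<lambda>z. mtens sB (hom_ev sB f x) (mul z (bas a))" for x]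
      by (simp add: mul_assoc lin_mtens_right_comp[OF vector_space_B] lin_mul_left_comp lin_id)
    show ?thesis by (simp only: cancel_Sinv)
  qed
  also have "\<dots> = mtens sB (hom_ev sB f (bas l)) (bas a)"
    by (rule counit_r) (intro lin_intros)
  also have "\<dots> = Poly_Mapping.single a (f l)"
    by (simp add: hom_ev_bas[OF vector_space_B] mtens_bas[OF vector_space_B])
  finally show ?thesis .
qed

lemma smash_to_hom_recovers_entries:
  "sw (pms sB) (comul (bas l)) (\<lambda>p q. mul_H_factor (Sinv q) (smash_to_hom_at t p)) = Poly_Mapping.map (\<lambda>f. f l) t"
proof -
  have "sw (pms sB) (comul (bas l)) (\<lambda>p q. mul_H_factor (Sinv q) (smash_to_hom_at t p))
      = (\<Sum>a\<in>Poly_Mapping.keys t. Poly_Mapping.single a (Poly_Mapping.lookup t a l))"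
    unfolding smash_to_hom_at_def sum_entries_def
    by (simp only: lin_sum[OF mul_H_factor_lin] sw_sum_fun[OF vector_space_BH] mul_H_factor_Sinv_recovers)
  also have "\<dots> = Poly_Mapping.map (\<lambda>f. f l) t"
    by (rule poly_mapping_eqI)
       (auto simp: lookup_sum lookup_single lookup_map_zero when_def sum.delta in_keys_iff)
  finally show ?thesis .
qed

lemma inj_smash_to_hom: "inj smash_to_hom"
proof (rule injI)
  fix x y assume eq: "smash_to_hom x = smash_to_hom y"
  have "smash_to_hom_at x k = smash_to_hom_at y k" for k
    by (rule lin_eq_on_basis[OF smash_to_hom_at_lin_arg smash_to_hom_at_lin_arg])
       (use eq in \<open>simp add: smash_to_hom_def fun_eq_iff\<close>)
  then have "Poly_Mapping.map (\<lambda>f. f l) x = Poly_Mapping.map (\<lambda>f. f l) y" for l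
    by (simp only: smash_to_hom_recovers_entries[symmetric])
  then have "Poly_Mapping.lookup x a l = Poly_Mapping.lookup y a l" for a l
    by (metis lookup_map_zero zero_fun_def)
  then show "x = y" by (intro poly_mapping_eqI ext)
qed

lemma subspace_smashB: "module.subspace (pms (fsc sB)) (smashB mul sB act)"
  unfolding smashB_def by (rule vs_subspace_span[OF vector_space_smash])

lemma smashB_generator: "f \<in> globB mul sB act \<Longrightarrow> mtens (fsc sB) f k \<in> smashB mul sB act"
  unfolding smashB_def by (rule span_in_generators[OF vector_space_smash]) auto

lemma smash_act_smashB_closed: assumes t: "t \<in> smashB mul sB act" shows "smash_act mul comul sB h t \<in> smashB mul sB act"
proof (rule lin_span_into_subspace[OF vector_space_smash vector_space_smash smash_act_lin t[unfolded smashB_def]])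
  show "module.subspace (pms (fsc sB)) (smashB mul sB act)" by (rule subspace_smashB)
  fix g :: "'i \<Rightarrow>\<^sub>0 ('i \<Rightarrow> 'B)" assume "g \<in> {mtens (fsc sB) f k |f k. f \<in> globB mul sB act}"
  then obtain f k where g: "g = mtens (fsc sB) f k" and f: "f \<in> globB mul sB act" by blast
  show "smash_act mul comul sB h g \<in> smashB mul sB act"
    unfolding g smash_act_mtens
    by (rule sw_in_subspace[OF vector_space_smash subspace_smashB])
       (intro smashB_generator, unfold globB_def, rule std_dilation_hom_act_closed[OF vector_space_B],
        fact f[unfolded globB_def])
qed

lemma smash_to_hom_dil_phi: "smash_to_hom (mtens (fsc sB) (dil_phi act b) k) = dil_phi (BH_pi mul comul sB act) (mtens sB b k)"
proof (rule ext)
  fix l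
  have "smash_to_hom (mtens (fsc sB) (dil_phi act b) k) l = sw (pms sB) (comul (bas l)) (\<lambda>x y. mtens sB (act x b) (mul y k))"
    unfolding smash_to_hom_def smash_to_hom_at_mtens by (simp only: hom_ev_dil_phi[OF vector_space_B act_lin_left])
  also have "\<dots> = dil_phi (BH_pi mul comul sB act) (mtens sB b k) l"
    unfolding dil_phi_def BH_pi_mtens ..
  finally show "smash_to_hom (mtens (fsc sB) (dil_phi act b) k) l = dil_phi (BH_pi mul comul sB act) (mtens sB b k) l" .
qed

lemma mtens_hom_act_expansion: "mtens (fsc sB) (hom_act mul sB h f) k
   = sw (pms (fsc sB)) (comul h) (\<lambda>x y. smash_act mul comul sB x (mtens (fsc sB) f (mul (S y) k)))"
proof -
  have "sw (pms (fsc sB)) (comul h) (\<lambda>x y. smash_act mul comul sB x (mtens (fsc sB) f (mul (S y) k)))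
     = sw (pms (fsc sB)) (comul h) (\<lambda>x y. sw (pms (fsc sB)) (comul x) (\<lambda>u v. mtens (fsc sB) (hom_act mul sB u f) (mul v (mul (S y) k))))"
    by (simp only: smash_act_mtens)
  also have "\<dots> = sw (pms (fsc sB)) (comul h) (\<lambda>x y. sw (pms (fsc sB)) (comul y) (\<lambda>u v. mtens (fsc sB) (hom_act mul sB x f) (mul u (mul (S v) k))))"
    by (rule coassoc[OF vector_space_smash])
  also have "\<dots> = sw (pms (fsc sB)) (comul h) (\<lambda>x y. pms (fsc sB) (eps y) (mtens (fsc sB) (hom_act mul sB x f) k))"
  proof -
    have cancel_S: "\<And>x y. sw (pms (fsc sB)) (comul y) (\<lambda>u v. mtens (fsc sB) (hom_act mul sB x f) (mul u (mul (S v) k)))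
      = pms (fsc sB) (eps y) (mtens (fsc sB) (hom_act mul sB x f) k)"
      using antipode_r[where G="\<lambda>z. mtens (fsc sB) (hom_act mul sB x f) (mul z k)" for x]
      by (simp add: mul_assoc lin_mtens_right_comp[OF vector_space_Hom_B] lin_mul_left_comp lin_id)
    show ?thesis by (simp only: cancel_S)
  qed
  also have "\<dots> = mtens (fsc sB) (hom_act mul sB h f) k"
    by (rule counit_r[where G="\<lambda>x. mtens (fsc sB) (hom_act mul sB x f) k"])
       (rule lin_comp[OF hom_act_lin_in_action[OF vector_space_B] mtens_lin_left[OF vector_space_Hom_B]])
  finally show ?thesis by simp
qed

lemma smash_to_hom_smashB: assumes t: "t \<in> smashB mul sB act" shows "smash_to_hom t \<in> dilation_BH UNIV"
proof (rule lin_span_into_subspace[OF vector_space_smash vector_space_Hom_BH smash_to_hom_lin t[unfolded smashB_def]])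
  show "module.subspace (fsc (pms sB)) (dilation_BH UNIV)" by (rule subspace_std_dilation[OF vector_space_BH])
  fix g :: "'i \<Rightarrow>\<^sub>0 ('i \<Rightarrow> 'B)" assume "g \<in> {mtens (fsc sB) f k |f k. f \<in> globB mul sB act}"
  then obtain f :: "'i \<Rightarrow> 'B" and k :: "'i \<Rightarrow>\<^sub>0 'k" where g: "g = mtens (fsc sB) f k" and f: "f \<in> globB mul sB act" by blast
  have "smash_to_hom (mtens (fsc sB) f k) \<in> dilation_BH UNIV"
    using f unfolding globB_def std_dilation_def[of _ sB]
  proof (rule lin_span_into_subspace[OF vector_space_Hom_B vector_space_Hom_BH lin_comp[OF mtens_lin_left[OF vector_space_Hom_B] smash_to_hom_lin]])
    show "module.subspace (fsc (pms sB)) (dilation_BH UNIV)" by (rule subspace_std_dilation[OF vector_space_BH])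
    fix f' assume "f' \<in> {hom_act mul sB h (dil_phi act m) |h m. m \<in> UNIV}"
    then obtain h :: "'i \<Rightarrow>\<^sub>0 'k" and b :: 'B where f': "f' = hom_act mul sB h (dil_phi act b)" by blast
    show "smash_to_hom (mtens (fsc sB) f' k) \<in> dilation_BH UNIV"
      unfolding f' mtens_hom_act_expansion
      by (simp only: sw_linear[OF smash_to_hom_lin] smash_to_hom_smash_act smash_to_hom_dil_phi)
         (rule sw_in_subspace[OF vector_space_Hom_BH subspace_std_dilation[OF vector_space_BH]], rule std_dilation_generator[OF vector_space_BH], simp)
  qed
  then show "smash_to_hom g \<in> dilation_BH UNIV" unfolding g .
qed

lemma dil_phi_BH_lin: "lin (pms sB) (fsc (pms sB)) (dil_phi (BH_pi mul comul sB act))"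
  unfolding dil_phi_def by (intro linI ext) (simp_all add: fsc_apply plus_fun_def lin_add[OF BH_pi_lin] lin_scale[OF BH_pi_lin])

lemma dil_phi_in_globB: "dil_phi act b \<in> globB mul sB act"
  using std_dilation_generator[OF vector_space_B, of b UNIV one act] unfolding globB_def by (simp add: hom_act_one[OF vector_space_B])

lemma dil_phi_in_image: "\<exists>t\<in>smashB mul sB act. smash_to_hom t = dil_phi (BH_pi mul comul sB act) m"
proof (intro bexI)
  let ?t = "\<Sum>a\<in>Poly_Mapping.keys m. mtens (fsc sB) (dil_phi act (Poly_Mapping.lookup m a)) (bas a)"
  show "?t \<in> smashB mul sB act"
    by (intro vs_subspace_sum[OF vector_space_smash subspace_smashB] smashB_generator dil_phi_in_globB)
  have "smash_to_hom ?t = (\<Sum>a\<in>Poly_Mapping.keys m. dil_phi (BH_pi mul comul sB act) (Poly_Mapping.single a (Poly_Mapping.lookup m a)))"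
    by (simp add: lin_sum[OF smash_to_hom_lin] smash_to_hom_dil_phi mtens_bas[OF vector_space_B])
  also have "\<dots> = dil_phi (BH_pi mul comul sB act) (\<Sum>a\<in>Poly_Mapping.keys m. Poly_Mapping.single a (Poly_Mapping.lookup m a))"
    by (simp add: lin_sum[OF dil_phi_BH_lin])
  also have "\<dots> = dil_phi (BH_pi mul comul sB act) m" by (simp only: single_expansion[symmetric])
  finally show "smash_to_hom ?t = dil_phi (BH_pi mul comul sB act) m" .
qed

lemma subspace_image_smash_to_hom: "module.subspace (fsc (pms sB)) (smash_to_hom ` smashB mul sB act)"
proof -
  interpret module_hom "pms (fsc sB)" "fsc (pms sB)" smash_to_hom
    by (rule lin_module_hom[OF vector_space_smash vector_space_Hom_BH smash_to_hom_lin])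
  show ?thesis by (rule subspace_image[OF subspace_smashB])
qed

lemma dilation_BH_subset_image: "dilation_BH M \<subseteq> smash_to_hom ` smashB mul sB act"
  unfolding std_dilation_def
proof (rule module.span_minimal[OF vector_space_Hom_BH[unfolded module_iff_vector_space[symmetric]]
      _ subspace_image_smash_to_hom])
  show "{hom_act mul (pms sB) h (dil_phi (BH_pi mul comul sB act) m) |h m. m \<in> M} \<subseteq> smash_to_hom ` smashB mul sB act"
  proof clarify
    fix h m
    obtain t where t: "t \<in> smashB mul sB act" "smash_to_hom t = dil_phi (BH_pi mul comul sB act) m"
      using dil_phi_in_image by blast
    have "hom_act mul (pms sB) h (dil_phi (BH_pi mul comul sB act) m) = smash_to_hom (smash_act mul comul sB h t)"
      unfolding smash_to_hom_smash_act t(2) ..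
    then show "hom_act mul (pms sB) h (dil_phi (BH_pi mul comul sB act) m) \<in> smash_to_hom ` smashB mul sB act"
      by (rule image_eqI[OF _ smash_act_smashB_closed[OF t(1)]])
  qed
qed

end

theorem mainTheorem17:
  fixes mul :: "('i \<Rightarrow>\<^sub>0 'k::field) \<Rightarrow> ('i \<Rightarrow>\<^sub>0 'k) \<Rightarrow> ('i \<Rightarrow>\<^sub>0 'k)"
    and one :: "'i \<Rightarrow>\<^sub>0 'k"
    and comul :: "('i \<Rightarrow>\<^sub>0 'k) \<Rightarrow> ('i \<times> 'i) \<Rightarrow>\<^sub>0 'k"
    and eps :: "('i \<Rightarrow>\<^sub>0 'k) \<Rightarrow> 'k"
    and S :: "('i \<Rightarrow>\<^sub>0 'k) \<Rightarrow> ('i \<Rightarrow>\<^sub>0 'k)"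
    and sB :: "'k \<Rightarrow> 'B::ring_1 \<Rightarrow> 'B"
    and act :: "('i \<Rightarrow>\<^sub>0 'k) \<Rightarrow> 'B \<Rightarrow> 'B"
  assumes "hopf_algebra mul one comul eps S"
    and "k_algebra sB"
    and "sym_partial_action mul one comul sB act"
  shows "\<exists>N N' (\<Phi> :: ('i \<Rightarrow> ('i \<Rightarrow>\<^sub>0 'B)) \<Rightarrow> ('i \<Rightarrow>\<^sub>0 ('i \<Rightarrow> 'B))).
           h_submodule (pms (fsc sB)) (smash_act mul comul sB) N \<and>
           h_submodule (pms (fsc sB)) (smash_act mul comul sB) N' \<and>
           N \<subseteq> smashB mul sB act \<and> N' \<subseteq> smashB mul sB act \<and>
           N \<inter> N' = {0} \<and>
           (\<forall>t\<in>smashB mul sB act. \<exists>n\<in>N. \<exists>n'\<in>N'. t = n + n') \<and>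
           (\<forall>x\<in>std_dilation mul (pms sB) (BH_pi mul comul sB act) (psmash comul sB act).
              \<forall>y\<in>std_dilation mul (pms sB) (BH_pi mul comul sB act) (psmash comul sB act).
                \<Phi> (x + y) = \<Phi> x + \<Phi> y) \<and>
           (\<forall>c. \<forall>x\<in>std_dilation mul (pms sB) (BH_pi mul comul sB act) (psmash comul sB act).
                \<Phi> (fsc (pms sB) c x) = pms (fsc sB) c (\<Phi> x)) \<and>
           (\<forall>h. \<forall>x\<in>std_dilation mul (pms sB) (BH_pi mul comul sB act) (psmash comul sB act).
                \<Phi> (hom_act mul (pms sB) h x) = smash_act mul comul sB h (\<Phi> x)) \<and>
           bij_betw \<Phi> (std_dilation mul (pms sB) (BH_pi mul comul sB act) (psmash comul sB act)) N"
proof -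
  interpret partial_hopf_action mul one comul eps S sB act
    by (intro partial_hopf_action.intro hopf.intro partial_hopf_action_axioms.intro assms)
  have smashB: "h_submodule (pms (fsc sB)) (smash_act mul comul sB) (smashB mul sB act)"
    by (simp add: h_submodule_def subspace_smashB smash_act_smashB_closed)
  show ?thesis
  proof (rule h_submodule_direct_summand_iso[where s="pms (fsc sB)" and s'="fsc (pms sB)"
        and A="smash_act mul comul sB" and A'="hom_act mul (pms sB)" and X="smashB mul sB act"
        and F=smash_to_hom and P=hom_smash_proj and D="dilation_BH (psmash comul sB act)"])
    show "hom_smash_proj (smash_to_hom t) \<in> dilation_BH (psmash comul sB act)" if "t \<in> smashB mul sB act" for t
      using hom_smash_proj_dilation[OF smash_to_hom_smashB[OF that]] .
  qed (simp_all add: vector_space_smash vector_space_Hom_BH smashB hom_act_lin[OF vector_space_BH]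
      smash_to_hom_lin inj_on_subset[OF inj_smash_to_hom subset_UNIV] smash_to_hom_smash_act
      hom_smash_proj_lin hom_smash_proj_hom_act hom_smash_proj_fixes_dilation dilation_BH_subset_image)
qed

end
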